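(* Let $\mathcal H$ be a family of graphs. The following are equivalent: (i) there is a constant $c=c(\mathcal H)$ such that every connected $\mathcal H$-free graph $G$ has fewer than $c$ vertices $v$ for which $G[N(v)]$ has at least $2$ connected components; (ii) there is a positive integer $n$ such that $\mathcal H\le \{K_n^*,\ K_{1,n}^*,\ P_n,\ K_{2,n},\ CK_n,\ T_n\}$.
   Context: All graphs are finite, simple, undirected. For graphs $H_1,H_2$, write $H_1\prec H_2$ if $H_2$ contains an induced subgraph isomorphic to $H_1$. A graph $G$ is $\mathcal H$-free if no $H\in\mathcal H$ satisfies $H\prec G$. For families $\mathcal H_1,\mathcal H_2$, write $\mathcal H_1\le\mathcal H_2$ if for every $H_2\in\mathcal H_2$ there is $H_1\in\mathcal H_1$ with $H_1\prec H_2$. $N(v)$ is the neighborhood of $v$ and $G[S]$ the induced subgraph. $K_n$, $E_n$, $P_n$ are the complete graph, edgeless graph, and path on $n$ vertices; $K_{s,t}$ is the complete bipartite graph; $G_1+G_2$ is the join (disjoint union plus all edges between $V(G_1)$ and $V(G_2)$). $K_{1,n}^*$ is obtained from the star $K_{1,n}$ by attaching a new pendant vertex to each leaf; $K_n^*$ is obtained from $K_n$ by attaching a new pendant vertex to each vertex; $CK_n$ is obtained from two disjoint copies of $K_n$ by adding a perfect matching between them; $T_n$ is obtained from the join $K_n+E_n$ by adding one new vertex adjacent to exactly the $n$ vertices of $E_n$. *)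

theory Defs
  imports Main
begin

type_synonym graph = "nat set \<times> (nat \<Rightarrow> nat \<Rightarrow> bool)"

definition verts :: "graph \<Rightarrow> nat set" where "verts G = fst G"
definition adj :: "graph \<Rightarrow> nat \<Rightarrow> nat \<Rightarrow> bool" where "adj G = snd G"

definition is_graph :: "graph \<Rightarrow> bool" where
  "is_graph G \<longleftrightarrow> finite (verts G)
     \<and> (\<forall>u v. adj G u v \<longrightarrow> adj G v u)
     \<and> (\<forall>u. \<not> adj G u u)
     \<and> (\<forall>u v. adj G u v \<longrightarrow> u \<in> verts G \<and> v \<in> verts G)"

definition induced_sub :: "graph \<Rightarrow> graph \<Rightarrow> bool" (infix "\<prec>" 50) where
  "H \<prec> G \<longleftrightarrow> (\<exists>f. inj_on f (verts H) \<and> f ` verts H \<subseteq> verts G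
     \<and> (\<forall>u\<in>verts H. \<forall>v\<in>verts H. adj H u v \<longleftrightarrow> adj G (f u) (f v)))"

definition H_free :: "graph set \<Rightarrow> graph \<Rightarrow> bool" where
  "H_free \<H> G \<longleftrightarrow> (\<forall>H\<in>\<H>. \<not> H \<prec> G)"

definition family_le :: "graph set \<Rightarrow> graph set \<Rightarrow> bool" where
  "family_le \<H>1 \<H>2 \<longleftrightarrow> (\<forall>H2\<in>\<H>2. \<exists>H1\<in>\<H>1. H1 \<prec> H2)"

definition reach_in :: "graph \<Rightarrow> nat set \<Rightarrow> nat \<Rightarrow> nat \<Rightarrow> bool" where
  "reach_in G S x y \<longleftrightarrow> x \<in> S \<and> y \<in> S \<and>
     (\<lambda>a b. a \<in> S \<and> b \<in> S \<and> adj G a b)\<^sup>*\<^sup>* x y"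

definition components :: "graph \<Rightarrow> nat set \<Rightarrow> nat set set" where
  "components G S = (\<lambda>x. {y \<in> S. reach_in G S x y}) ` S"

definition connected_graph :: "graph \<Rightarrow> bool" where
  "connected_graph G \<longleftrightarrow> (\<forall>x\<in>verts G. \<forall>y\<in>verts G. reach_in G (verts G) x y)"

definition nbhd :: "graph \<Rightarrow> nat \<Rightarrow> nat set" where
  "nbhd G v = {u \<in> verts G. adj G v u}"

definition bad_verts :: "graph \<Rightarrow> nat set" where
  "bad_verts G = {v \<in> verts G. card (components G (nbhd G v)) \<ge> 2}"

(* K_n^*: clique on 0..n-1, pendant i+n attached to i *)
definition Kstar :: "nat \<Rightarrow> graph" where
  "Kstar n = ({0..<2*n}, \<lambda>u v. (u < n \<and> v < n \<and> u \<noteq> v)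
      \<or> (u < n \<and> v = u + n) \<or> (v < n \<and> u = v + n))"

(* K_{1,n}^*: centre 0, leaves 1..n, pendant i+n attached to leaf i *)
definition K1nstar :: "nat \<Rightarrow> graph" where
  "K1nstar n = ({0..2*n}, \<lambda>u v. (u = 0 \<and> 1 \<le> v \<and> v \<le> n) \<or> (v = 0 \<and> 1 \<le> u \<and> u \<le> n)
      \<or> (1 \<le> u \<and> u \<le> n \<and> v = u + n) \<or> (1 \<le> v \<and> v \<le> n \<and> u = v + n))"

definition Path :: "nat \<Rightarrow> graph" where
  "Path n = ({0..<n}, \<lambda>u v. u < n \<and> v < n \<and> (v = u + 1 \<or> u = v + 1))"

definition K2n :: "nat \<Rightarrow> graph" where
  "K2n n = ({0..<n+2}, \<lambda>u v. (u < 2 \<and> 2 \<le> v \<and> v < n + 2) \<or> (v < 2 \<and> 2 \<le> u \<and> u < n + 2))"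

(* CK_n: cliques on 0..n-1 and n..2n-1, matching i -- i+n *)
definition CK :: "nat \<Rightarrow> graph" where
  "CK n = ({0..<2*n}, \<lambda>u v. (u < n \<and> v < n \<and> u \<noteq> v)
      \<or> (n \<le> u \<and> u < 2*n \<and> n \<le> v \<and> v < 2*n \<and> u \<noteq> v)
      \<or> (u < n \<and> v = u + n) \<or> (v < n \<and> u = v + n))"

(* T_n: K_n on 0..n-1 joined to E_n on n..2n-1, plus vertex 2n adjacent to n..2n-1 *)
definition Tgraph :: "nat \<Rightarrow> graph" where
  "Tgraph n = ({0..2*n}, \<lambda>u v. (u < n \<and> v < n \<and> u \<noteq> v)
      \<or> (u < n \<and> n \<le> v \<and> v < 2*n) \<or> (v < n \<and> n \<le> u \<and> u < 2*n)
      \<or> (u = 2*n \<and> n \<le> v \<and> v < 2*n) \<or> (v = 2*n \<and> n \<le> u \<and> u < 2*n))"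

end

theory Submission
  imports Defs "HOL-Library.Ramsey"
begin

lemma ramsey_homogeneous_subseq:
  fixes C :: "'c set" and m :: nat
  assumes "finite C"
  shows "\<exists>N. \<forall>f :: nat \<Rightarrow> nat \<Rightarrow> 'c. (\<forall>i j. i < j \<longrightarrow> j < N \<longrightarrow> f i j \<in> C) \<longrightarrow>
     (\<exists>h. strict_mono_on {..<m} h \<and> h ` {..<m} \<subseteq> {..<N}
        \<and> (\<exists>c. \<forall>i j. i < j \<longrightarrow> j < m \<longrightarrow> f (h i) (h j) = c))"
proof -
  obtain idx where idx: "bij_betw idx C {0..<card C}"
    using ex_bij_betw_finite_nat[OF assms] by blast
  obtain N :: nat where N: "partn_lst {..<N} (replicate (card C) m) 2"
    using ramsey_full by blast
  have "\<exists>h. strict_mono_on {..<m} h \<and> h ` {..<m} \<subseteq> {..<N}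
        \<and> (\<exists>c. \<forall>i j. i < j \<longrightarrow> j < m \<longrightarrow> f (h i) (h j) = c)"
    if f: "\<forall>i j. i < j \<longrightarrow> j < N \<longrightarrow> f i j \<in> C" for f :: "nat \<Rightarrow> nat \<Rightarrow> 'c"
  proof -
    define g where "g e = idx (f (Min e) (Max e))" for e
    have "g \<in> [{..<N}]\<^bsup>2\<^esup> \<rightarrow> {..<card C}"
    proof
      fix e assume "e \<in> [{..<N}]\<^bsup>2\<^esup>"
      then obtain a b where "e = {a, b}" "a < b" "b < N"
        by (auto simp: ordered_nsets_2_eq)
      then show "g e \<in> {..<card C}"
        using f bij_betwE[OF idx] by (auto simp: g_def)
    qed
    then obtain k H where "k < card C" and H: "H \<in> [{..<N}]\<^bsup>m\<^esup>" and hom: "g ` [H]\<^bsup>2\<^esup> \<subseteq> {k}"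
      using partn_lstE[OF N] by (metis length_replicate nth_replicate)
    define h where "h i = sorted_list_of_set H ! i" for i
    have H': "H \<subseteq> {..<N}" "finite H" "card H = m"
      using H by (auto simp: nsets_def finite_subset)
    have mono: "strict_mono_on {..<m} h"
      using H' by (auto simp: strict_mono_on_def h_def intro: sorted_wrt_nth_less)
    have hH: "h i \<in> H" if "i < m" for i
      using H' that nth_mem[of i "sorted_list_of_set H"] by (simp add: h_def)
    have "f (h i) (h j) = inv_into C idx k" if "i < j" "j < m" for i j
    proof -
      have lt: "h i < h j" using mono that by (simp add: strict_mono_on_def)
      then have "{h i, h j} \<in> [H]\<^bsup>2\<^esup>" using hH that by simp
      then have "g {h i, h j} = k" using hom by blast
      then have "idx (f (h i) (h j)) = k" using lt by (simp add: g_def)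
      moreover have "f (h i) (h j) \<in> C" using f lt hH H'(1) that by auto
      ultimately show ?thesis using idx by (auto simp: bij_betw_def)
    qed
    then show ?thesis using mono hH H'(1) by blast
  qed
  then show ?thesis by blast
qed

lemma graph_adj_sym: "is_graph G \<Longrightarrow> adj G u v \<Longrightarrow> adj G v u"
  and graph_adj_irrefl: "is_graph G \<Longrightarrow> \<not> adj G u u"
  and graph_adj_verts: "is_graph G \<Longrightarrow> adj G u v \<Longrightarrow> u \<in> verts G \<and> v \<in> verts G"
  and graph_finite_verts: "is_graph G \<Longrightarrow> finite (verts G)"
  by (auto simp: is_graph_def)

lemma graph_adj_commute: "is_graph G \<Longrightarrow> adj G u v \<longleftrightarrow> adj G v u"
  using graph_adj_sym by blast

lemma induced_subI:
  assumes "inj_on f (verts H)" "f ` verts H \<subseteq> verts G"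
    and "\<And>u v. u \<in> verts H \<Longrightarrow> v \<in> verts H \<Longrightarrow> adj H u v \<longleftrightarrow> adj G (f u) (f v)"
  shows "induced_sub H G"
  using assms unfolding induced_sub_def by blast

lemma induced_sub_trans: "induced_sub A B \<Longrightarrow> induced_sub B C \<Longrightarrow> induced_sub A C"
  unfolding induced_sub_def
  by (clarify, rule_tac x = "fa \<circ> f" in exI) (auto simp: inj_on_def image_subset_iff)

lemma Kstar_verts: "verts (Kstar n) = {0..<2*n}"
  and Kstar_adj: "adj (Kstar n) u v \<longleftrightarrow>
    (u < n \<and> v < n \<and> u \<noteq> v) \<or> (u < n \<and> v = u + n) \<or> (v < n \<and> u = v + n)"
  by (simp_all add: Kstar_def verts_def adj_def)

lemma K1nstar_verts: "verts (K1nstar n) = {0..2*n}"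
  and K1nstar_adj: "adj (K1nstar n) u v \<longleftrightarrow>
    (u = 0 \<and> 1 \<le> v \<and> v \<le> n) \<or> (v = 0 \<and> 1 \<le> u \<and> u \<le> n) \<or>
    (1 \<le> u \<and> u \<le> n \<and> v = u + n) \<or> (1 \<le> v \<and> v \<le> n \<and> u = v + n)"
  by (simp_all add: K1nstar_def verts_def adj_def)

lemma Path_verts: "verts (Path n) = {0..<n}"
  and Path_adj: "adj (Path n) u v \<longleftrightarrow> u < n \<and> v < n \<and> (v = u + 1 \<or> u = v + 1)"
  by (simp_all add: Path_def verts_def adj_def)

lemma K2n_verts: "verts (K2n n) = {0..<n+2}"
  and K2n_adj: "adj (K2n n) u v \<longleftrightarrow>
    (u < 2 \<and> 2 \<le> v \<and> v < n + 2) \<or> (v < 2 \<and> 2 \<le> u \<and> u < n + 2)"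
  by (simp_all add: K2n_def verts_def adj_def)

lemma CK_verts: "verts (CK n) = {0..<2*n}"
  and CK_adj: "adj (CK n) u v \<longleftrightarrow> (u < n \<and> v < n \<and> u \<noteq> v)
    \<or> (n \<le> u \<and> u < 2*n \<and> n \<le> v \<and> v < 2*n \<and> u \<noteq> v)
    \<or> (u < n \<and> v = u + n) \<or> (v < n \<and> u = v + n)"
  by (simp_all add: CK_def verts_def adj_def)

lemma Tgraph_verts: "verts (Tgraph n) = {0..2*n}"
  and Tgraph_adj: "adj (Tgraph n) u v \<longleftrightarrow> (u < n \<and> v < n \<and> u \<noteq> v)
    \<or> (u < n \<and> n \<le> v \<and> v < 2*n) \<or> (v < n \<and> n \<le> u \<and> u < 2*n)
    \<or> (u = 2*n \<and> n \<le> v \<and> v < 2*n) \<or> (v = 2*n \<and> n \<le> u \<and> u < 2*n)"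
  by (simp_all add: Tgraph_def verts_def adj_def)

lemma Kstar_induced_subI:
  assumes G: "is_graph G"
    and verts: "\<And>i. i < n \<Longrightarrow> a i \<in> verts G" "\<And>i. i < n \<Longrightarrow> b i \<in> verts G"
    and aa: "\<And>i j. i < n \<Longrightarrow> j < n \<Longrightarrow> adj G (a i) (a j) \<longleftrightarrow> i \<noteq> j"
    and bb: "\<And>i j. i < n \<Longrightarrow> j < n \<Longrightarrow> \<not> adj G (b i) (b j)"
    and ab: "\<And>i j. i < n \<Longrightarrow> j < n \<Longrightarrow> adj G (a i) (b j) \<longleftrightarrow> i = j"
  shows "induced_sub (Kstar n) G"
proof (rule induced_subI)
  define f where "f u = (if u < n then a u else b (u - n))" for u
  have ba: "adj G (b j) (a i) \<longleftrightarrow> i = j" if "i < n" "j < n" for i j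
    using ab[OF that] graph_adj_commute[OF G] by blast
  have a_eq: "a i = a j \<longleftrightarrow> i = j" if "i < n" "j < n" for i j
    using aa[OF that] graph_adj_irrefl[OF G] by metis
  have b_eq: "b i = b j \<longleftrightarrow> i = j" if "i < n" "j < n" for i j
    using ab[of i i] ab[of i j] that by metis
  have ab_neq: "a i \<noteq> b j" if "i < n" "j < n" for i j
    using ab[of i i] bb[of j i] that by metis
  show "inj_on f (verts (Kstar n))"
    by (auto simp: inj_on_def f_def Kstar_verts a_eq b_eq ab_neq ab_neq[symmetric] split: if_splits)
  show "f ` verts (Kstar n) \<subseteq> verts G"
    using verts by (auto simp: f_def Kstar_verts)
  show "adj (Kstar n) u v \<longleftrightarrow> adj G (f u) (f v)" if "u \<in> verts (Kstar n)" "v \<in> verts (Kstar n)" for u v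
    using that by (auto simp: f_def Kstar_verts Kstar_adj aa bb ab ba)
qed

lemma CK_induced_subI:
  assumes G: "is_graph G"
    and verts: "\<And>i. i < n \<Longrightarrow> a i \<in> verts G" "\<And>i. i < n \<Longrightarrow> b i \<in> verts G"
    and aa: "\<And>i j. i < n \<Longrightarrow> j < n \<Longrightarrow> adj G (a i) (a j) \<longleftrightarrow> i \<noteq> j"
    and bb: "\<And>i j. i < n \<Longrightarrow> j < n \<Longrightarrow> adj G (b i) (b j) \<longleftrightarrow> i \<noteq> j"
    and ab: "\<And>i j. i < n \<Longrightarrow> j < n \<Longrightarrow> adj G (a i) (b j) \<longleftrightarrow> i = j"
    and ab_neq: "\<And>i j. i < n \<Longrightarrow> j < n \<Longrightarrow> a i \<noteq> b j"
  shows "induced_sub (CK n) G"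
proof (rule induced_subI)
  define f where "f u = (if u < n then a u else b (u - n))" for u
  have ba: "adj G (b j) (a i) \<longleftrightarrow> i = j" if "i < n" "j < n" for i j
    using ab[OF that] graph_adj_commute[OF G] by blast
  have a_eq: "a i = a j \<longleftrightarrow> i = j" and b_eq: "b i = b j \<longleftrightarrow> i = j" if "i < n" "j < n" for i j
    using aa[OF that] bb[OF that] graph_adj_irrefl[OF G] by metis+
  show "inj_on f (verts (CK n))"
    by (auto simp: inj_on_def f_def CK_verts a_eq b_eq ab_neq ab_neq[symmetric] split: if_splits)
  show "f ` verts (CK n) \<subseteq> verts G"
    using verts by (auto simp: f_def CK_verts)
  show "adj (CK n) u v \<longleftrightarrow> adj G (f u) (f v)" if "u \<in> verts (CK n)" "v \<in> verts (CK n)" for u v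
    using that by (auto simp: f_def CK_verts CK_adj aa bb ab ba)
qed

lemma K1nstar_induced_subI:
  assumes G: "is_graph G"
    and verts: "c \<in> verts G" "\<And>i. i < n \<Longrightarrow> a i \<in> verts G" "\<And>i. i < n \<Longrightarrow> b i \<in> verts G"
    and ca: "\<And>i. i < n \<Longrightarrow> adj G c (a i)"
    and cb: "\<And>i. i < n \<Longrightarrow> \<not> adj G c (b i)" "\<And>i. i < n \<Longrightarrow> c \<noteq> b i"
    and aa: "\<And>i j. i < n \<Longrightarrow> j < n \<Longrightarrow> \<not> adj G (a i) (a j)"
    and bb: "\<And>i j. i < n \<Longrightarrow> j < n \<Longrightarrow> \<not> adj G (b i) (b j)"
    and ab: "\<And>i j. i < n \<Longrightarrow> j < n \<Longrightarrow> adj G (a i) (b j) \<longleftrightarrow> i = j"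
  shows "induced_sub (K1nstar n) G"
proof (rule induced_subI)
  define f where "f u = (if u = 0 then c else if u \<le> n then a (u - 1) else b (u - n - 1))" for u
  have ba: "adj G (b j) (a i) \<longleftrightarrow> i = j" if "i < n" "j < n" for i j
    using ab[OF that] graph_adj_commute[OF G] by blast
  have ac: "adj G (a i) c" "\<not> adj G (b i) c" if "i < n" for i
    using ca[OF that] cb(1)[OF that] graph_adj_commute[OF G] by blast+
  have a_eq: "a i = a j \<longleftrightarrow> i = j" and b_eq: "b i = b j \<longleftrightarrow> i = j" if "i < n" "j < n" for i j
    using ab[of i i] ab[of j i] ab[of i j] that by metis+
  have ab_neq: "a i \<noteq> b j" if "i < n" "j < n" for i j
    using ca[of i] cb[of j] that by metis
  have ca_neq: "c \<noteq> a i" if "i < n" for i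
    using ca[OF that] graph_adj_irrefl[OF G] by metis
  show "inj_on f (verts (K1nstar n))"
    by (auto simp: inj_on_def f_def K1nstar_verts a_eq b_eq ab_neq ca_neq cb(2)
        ab_neq[symmetric] ca_neq[symmetric] cb(2)[symmetric] split: if_splits)
  show "f ` verts (K1nstar n) \<subseteq> verts G"
    using verts by (auto simp: f_def K1nstar_verts)
  show "adj (K1nstar n) u v \<longleftrightarrow> adj G (f u) (f v)"
    if "u \<in> verts (K1nstar n)" "v \<in> verts (K1nstar n)" for u v
    using that graph_adj_irrefl[OF G]
    by (auto simp: f_def K1nstar_verts K1nstar_adj ca cb aa bb ab ba ac)
qed

lemma Path_induced_subI:
  assumes "inj_on p {..<n}" "\<And>i. i < n \<Longrightarrow> p i \<in> verts G"
    and "\<And>i j. i < n \<Longrightarrow> j < n \<Longrightarrow> adj G (p i) (p j) \<longleftrightarrow> j = i + 1 \<or> i = j + 1"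
  shows "induced_sub (Path n) G"
  by (rule induced_subI[where f = p]) (use assms in \<open>auto simp: Path_verts Path_adj atLeast0LessThan\<close>)

lemma K2n_induced_subI:
  assumes G: "is_graph G"
    and verts: "x \<in> verts G" "y \<in> verts G" "\<And>i. i < n \<Longrightarrow> w i \<in> verts G"
    and xy: "x \<noteq> y" "\<not> adj G x y"
    and xw: "\<And>i. i < n \<Longrightarrow> adj G x (w i)" and yw: "\<And>i. i < n \<Longrightarrow> adj G y (w i)"
    and ww: "\<And>i j. i < n \<Longrightarrow> j < n \<Longrightarrow> \<not> adj G (w i) (w j)"
    and w_inj: "inj_on w {..<n}"
  shows "induced_sub (K2n n) G"
proof (rule induced_subI)
  define f where "f u = (if u = 0 then x else if u = 1 then y else w (u - 2))" for u
  have sym: "adj G (w i) x" "adj G (w i) y" if "i < n" for i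
    using xw[OF that] yw[OF that] graph_adj_commute[OF G] by blast+
  have yx: "\<not> adj G y x"
    using xy graph_adj_commute[OF G] by blast
  have neq: "x \<noteq> w i" "y \<noteq> w i" if "i < n" for i
    using xw[OF that] yw[OF that] graph_adj_irrefl[OF G] by metis+
  have w_eq: "w i = w j \<longleftrightarrow> i = j" if "i < n" "j < n" for i j
    using w_inj that by (auto dest: inj_onD)
  show "inj_on f (verts (K2n n))"
    using xy(1)
    by (auto simp: inj_on_def f_def K2n_verts neq neq[symmetric] w_eq split: if_splits)
  show "f ` verts (K2n n) \<subseteq> verts G"
    using verts by (auto simp: f_def K2n_verts)
  show "adj (K2n n) u v \<longleftrightarrow> adj G (f u) (f v)" if "u \<in> verts (K2n n)" "v \<in> verts (K2n n)" for u v
    using that graph_adj_irrefl[OF G] xy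
    by (auto simp: f_def K2n_verts K2n_adj xw yw ww sym yx)
qed

lemma Tgraph_induced_subI:
  assumes G: "is_graph G"
    and verts: "z \<in> verts G" "\<And>i. i < n \<Longrightarrow> y i \<in> verts G" "\<And>i. i < n \<Longrightarrow> w i \<in> verts G"
    and yy: "\<And>i j. i < n \<Longrightarrow> j < n \<Longrightarrow> adj G (y i) (y j) \<longleftrightarrow> i \<noteq> j"
    and ww: "\<And>i j. i < n \<Longrightarrow> j < n \<Longrightarrow> \<not> adj G (w i) (w j)"
    and yw: "\<And>i j. i < n \<Longrightarrow> j < n \<Longrightarrow> adj G (y i) (w j)"
    and zw: "\<And>i. i < n \<Longrightarrow> adj G z (w i)"
    and zy: "\<And>i. i < n \<Longrightarrow> \<not> adj G z (y i)" "\<And>i. i < n \<Longrightarrow> z \<noteq> y i"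
    and w_inj: "inj_on w {..<n}"
  shows "induced_sub (Tgraph n) G"
proof (rule induced_subI)
  define f where "f u = (if u < n then y u else if u < 2*n then w (u - n) else z)" for u
  have wy: "adj G (w j) (y i)" if "i < n" "j < n" for i j
    using yw[OF that] graph_adj_commute[OF G] by blast
  have wz: "adj G (w i) z" "\<not> adj G (y i) z" if "i < n" for i
    using zw[OF that] zy(1)[OF that] graph_adj_commute[OF G] by blast+
  have y_eq: "y i = y j \<longleftrightarrow> i = j" if "i < n" "j < n" for i j
    using yy[OF that] graph_adj_irrefl[OF G] by metis
  have yw_neq: "y i \<noteq> w j" if "i < n" "j < n" for i j
    using yw[OF that] graph_adj_irrefl[OF G] by metis
  have zw_neq: "z \<noteq> w i" if "i < n" for i
    using zw[OF that] graph_adj_irrefl[OF G] by metis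
  have w_eq: "w i = w j \<longleftrightarrow> i = j" if "i < n" "j < n" for i j
    using w_inj that by (auto dest: inj_onD)
  show "inj_on f (verts (Tgraph n))"
    by (auto simp: inj_on_def f_def Tgraph_verts y_eq w_eq yw_neq zw_neq zy(2)
        yw_neq[symmetric] zw_neq[symmetric] zy(2)[symmetric] split: if_splits)
  show "f ` verts (Tgraph n) \<subseteq> verts G"
    using verts by (auto simp: f_def Tgraph_verts)
  show "adj (Tgraph n) u v \<longleftrightarrow> adj G (f u) (f v)"
    if "u \<in> verts (Tgraph n)" "v \<in> verts (Tgraph n)" for u v
    using that graph_adj_irrefl[OF G]
    by (auto simp: f_def Tgraph_verts Tgraph_adj yy ww yw zw zy wy wz)
qed

lemma reach_in_refl: "x \<in> S \<Longrightarrow> reach_in G S x x"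
  and reach_in_adj: "x \<in> S \<Longrightarrow> y \<in> S \<Longrightarrow> adj G x y \<Longrightarrow> reach_in G S x y"
  and reach_in_trans: "reach_in G S x y \<Longrightarrow> reach_in G S y z \<Longrightarrow> reach_in G S x z"
  by (auto simp: reach_in_def)

lemma reach_in_sym:
  assumes G: "is_graph G" and "reach_in G S x y"
  shows "reach_in G S y x"
proof -
  let ?E = "\<lambda>a b. a \<in> S \<and> b \<in> S \<and> adj G a b"
  have "?E\<^sup>*\<^sup>* x y" using assms(2) by (simp add: reach_in_def)
  then have "?E\<^sup>*\<^sup>* y x"
    by (induction rule: rtranclp_induct)
       (auto intro: converse_rtranclp_into_rtranclp graph_adj_sym[OF G])
  then show ?thesis using assms(2) by (simp add: reach_in_def)
qed

lemma not_reach_in_nbr: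
  assumes "reach_in G S u z" "y \<in> S" "\<not> reach_in G S u y"
  shows "z \<noteq> y" "\<not> adj G z y"
  using assms reach_in_trans[OF assms(1)] reach_in_adj[of z S y G]
  by (auto simp: reach_in_def)

lemma bad_verts_unreachable_nbr:
  assumes G: "is_graph G" and "v \<in> bad_verts G" "u \<in> nbhd G v"
  shows "\<exists>y \<in> nbhd G v. \<not> reach_in G (nbhd G v) u y"
proof (rule ccontr)
  let ?S = "nbhd G v"
  assume "\<not> ?thesis"
  then have reach: "reach_in G ?S u y" if "y \<in> ?S" for y
    using that by blast
  have "{y \<in> ?S. reach_in G ?S x y} = {y \<in> ?S. reach_in G ?S u y}" if "x \<in> ?S" for x
    using reach[OF that] reach_in_sym[OF G] reach_in_trans by blast
  then have "components G ?S \<subseteq> {{y \<in> ?S. reach_in G ?S u y}}"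
    by (auto simp: components_def)
  then have "card (components G ?S) \<le> 1"
    using card_mono[of "{_}"] by fastforce
  then show False
    using assms(2) by (simp add: bad_verts_def)
qed

lemma bad_vertsI:
  assumes G: "is_graph G" and "adj G v x" "adj G v y" "x \<noteq> y"
    and x_isolated: "\<And>z. adj G v z \<Longrightarrow> \<not> adj G x z"
  shows "v \<in> bad_verts G"
proof -
  let ?S = "nbhd G v" and ?C = "\<lambda>x. {y \<in> nbhd G v. reach_in G (nbhd G v) x y}"
  have S: "x \<in> ?S" "y \<in> ?S" "finite ?S"
    using assms(2,3) graph_adj_verts[OF G] graph_finite_verts[OF G] by (auto simp: nbhd_def)
  have "y \<notin> ?C x"
  proof
    assume "y \<in> ?C x"
    then have "(\<lambda>a b. a \<in> ?S \<and> b \<in> ?S \<and> adj G a b)\<^sup>*\<^sup>* x y"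
      by (simp add: reach_in_def)
    then have "y = x"
      by (induction rule: rtranclp_induct) (use x_isolated in \<open>auto simp: nbhd_def\<close>)
    then show False using assms(4) by simp
  qed
  then have "?C x \<noteq> ?C y"
    using S reach_in_refl by blast
  moreover have "{?C x, ?C y} \<subseteq> components G ?S"
    using S by (auto simp: components_def)
  ultimately have "2 \<le> card (components G ?S)"
    using card_mono[of "components G ?S" "{?C x, ?C y}"] S(3) by (simp add: components_def)
  then show ?thesis
    using assms(2) graph_adj_verts[OF G] by (simp add: bad_verts_def)
qed

fun bfs_layer :: "graph \<Rightarrow> nat \<Rightarrow> nat \<Rightarrow> nat set" where
  "bfs_layer G r 0 = {r}"
| "bfs_layer G r (Suc k) =
     {v \<in> verts G. (\<forall>i\<le>k. v \<notin> bfs_layer G r i) \<and> (\<exists>u \<in> bfs_layer G r k. adj G u v)}"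

lemma bfs_layer_subset: "r \<in> verts G \<Longrightarrow> bfs_layer G r k \<subseteq> verts G"
  by (cases k) auto

lemma bfs_layer_unique: "v \<in> bfs_layer G r i \<Longrightarrow> v \<in> bfs_layer G r j \<Longrightarrow> i = j"
proof (induction i j rule: linorder_less_wlog)
  case (less i j)
  then obtain k where "j = Suc k" "i \<le> k" by (cases j) auto
  then show ?case using less by auto
qed auto

lemma bfs_layer_adj:
  assumes G: "is_graph G" and u: "u \<in> bfs_layer G r i" and v: "v \<in> bfs_layer G r j"
    and uv: "adj G u v"
  shows "j \<le> Suc i"
proof (rule ccontr)
  assume "\<not> j \<le> Suc i"
  then have earlier: "v \<notin> bfs_layer G r k" if "k \<le> Suc i" for k
    using bfs_layer_unique[OF v] that by (metis le_trans nat_le_linear)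
  have "v \<in> verts G"
    using graph_adj_verts[OF G uv] by blast
  then have "v \<in> bfs_layer G r (Suc i)"
    using earlier u uv by auto
  then show False
    using earlier by blast
qed

lemma bfs_layer_cover:
  assumes "connected_graph G" "r \<in> verts G" "v \<in> verts G"
  shows "\<exists>k. v \<in> bfs_layer G r k"
proof -
  have "(\<lambda>a b. a \<in> verts G \<and> b \<in> verts G \<and> adj G a b)\<^sup>*\<^sup>* r v"
    using assms by (simp add: connected_graph_def reach_in_def)
  then show ?thesis
  proof (induction rule: rtranclp_induct)
    case (step u v)
    then obtain k where "u \<in> bfs_layer G r k" by blast
    then have "v \<in> bfs_layer G r (Suc k) \<or> (\<exists>i\<le>k. v \<in> bfs_layer G r i)"
      using step by auto
    then show ?case by blast
  qed (use bfs_layer.simps(1) in blast)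
qed

lemma bfs_layer_path:
  "v \<in> bfs_layer G r k \<Longrightarrow>
    \<exists>p. p k = v \<and> (\<forall>i\<le>k. p i \<in> bfs_layer G r i) \<and> (\<forall>i<k. adj G (p i) (p (Suc i)))"
proof (induction k arbitrary: v)
  case 0
  then show ?case by (intro exI[of _ "\<lambda>_. v"]) auto
next
  case (Suc k)
  then obtain u where u: "u \<in> bfs_layer G r k" "adj G u v" by auto
  obtain p where "p k = u" "\<forall>i\<le>k. p i \<in> bfs_layer G r i" "\<forall>i<k. adj G (p i) (p (Suc i))"
    using Suc.IH[OF u(1)] by blast
  then show ?case
    using Suc.prems u by (intro exI[of _ "p(Suc k := v)"]) (auto simp: le_Suc_eq less_Suc_eq)
qed

lemma induced_Path_if_bfs_layer:
  assumes G: "is_graph G" and "r \<in> verts G" "v \<in> bfs_layer G r k" "m \<le> Suc k"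
  shows "induced_sub (Path m) G"
proof -
  obtain p where p: "\<And>i. i \<le> k \<Longrightarrow> p i \<in> bfs_layer G r i" "\<And>i. i < k \<Longrightarrow> adj G (p i) (p (Suc i))"
    using bfs_layer_path[OF assms(3)] by blast
  have "adj G (p i) (p j) \<longleftrightarrow> j = i + 1 \<or> i = j + 1" if "i \<le> k" "j \<le> k" for i j
  proof
    assume ij: "adj G (p i) (p j)"
    have "p i \<in> bfs_layer G r i" "p j \<in> bfs_layer G r j"
      using p(1) that by auto
    then have "j \<le> Suc i" "i \<le> Suc j"
      using bfs_layer_adj[OF G] ij graph_adj_sym[OF G ij] by blast+
    moreover have "i \<noteq> j"
      using ij graph_adj_irrefl[OF G] by blast
    ultimately show "j = i + 1 \<or> i = j + 1"
      by auto
  next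
    assume "j = i + 1 \<or> i = j + 1"
    then show "adj G (p i) (p j)"
      using p(2) that graph_adj_commute[OF G] by auto
  qed
  moreover have "inj_on p {..<m}"
  proof (rule inj_onI)
    fix i j assume "i \<in> {..<m}" "j \<in> {..<m}" "p i = p j"
    then show "i = j"
      using assms(4) p(1)[of i] p(1)[of j] bfs_layer_unique by auto
  qed
  moreover have "p i \<in> verts G" if "i < m" for i
    using assms(4) that p(1)[of i] bfs_layer_subset[OF assms(2)] by auto
  ultimately show ?thesis
    using assms(4) by (intro Path_induced_subI) auto
qed

definition obstructions :: "nat \<Rightarrow> graph set" where
  "obstructions n = {Kstar n, K1nstar n, Path n, K2n n, CK n, Tgraph n}"

lemma H_free_obstructions:
  "H_free (obstructions n) G \<longleftrightarrow>
    \<not> induced_sub (Kstar n) G \<and> \<not> induced_sub (K1nstar n) G \<and> \<not> induced_sub (Path n) G \<and>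
    \<not> induced_sub (K2n n) G \<and> \<not> induced_sub (CK n) G \<and> \<not> induced_sub (Tgraph n) G"
  by (simp add: H_free_def obstructions_def)

lemma H_free_if_family_le:
  assumes "family_le \<H>1 \<H>2" "H_free \<H>1 G"
  shows "H_free \<H>2 G"
  using assms induced_sub_trans unfolding family_le_def H_free_def by blast

lemma adj_homogeneous:
  fixes m :: nat
  assumes G: "is_graph G" and hom: "\<And>i j. i < j \<Longrightarrow> j < m \<Longrightarrow> adj G (x i) (x j) = B"
    and "i < m" "j < m"
  shows "adj G (x i) (x j) \<longleftrightarrow> B \<and> i \<noteq> j"
  using hom[of i j] hom[of j i] assms(3,4) graph_adj_irrefl[OF G] graph_adj_commute[OF G]
  by (cases i j rule: linorder_cases) auto

lemma bad_clique_private_nbrs: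
  fixes m :: nat
  assumes G: "is_graph G" and "2 \<le> m"
    and bad: "\<And>i. i < m \<Longrightarrow> q i \<in> bad_verts G"
    and clique: "\<And>i j. i < m \<Longrightarrow> j < m \<Longrightarrow> adj G (q i) (q j) \<longleftrightarrow> i \<noteq> j"
  obtains p where "\<And>i. i < m \<Longrightarrow> adj G (q i) (p i)"
    and "\<And>i k. i < m \<Longrightarrow> k < m \<Longrightarrow> k \<noteq> i \<Longrightarrow> \<not> adj G (q k) (p i) \<and> q k \<noteq> p i"
proof -
  have "\<exists>p. adj G (q i) p \<and> (\<forall>k<m. k \<noteq> i \<longrightarrow> \<not> adj G (q k) p \<and> q k \<noteq> p)" if i: "i < m" for i
  proof -
    let ?S = "nbhd G (q i)"
    define j where "j = (if i = 0 then 1 else 0 :: nat)"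
    have j: "j < m" "j \<noteq> i" using assms(2) by (auto simp: j_def)
    have in_S: "q k \<in> ?S" if "k < m" "k \<noteq> i" for k
      using clique[OF i that(1)] that graph_adj_verts[OF G] by (auto simp: nbhd_def)
    obtain p where p: "p \<in> ?S" "\<not> reach_in G ?S (q j) p"
      using bad_verts_unreachable_nbr[OF G bad[OF i] in_S[OF j]] by blast
    have "reach_in G ?S (q j) (q k)" if "k < m" "k \<noteq> i" for k
      using clique[OF j(1) that(1)] in_S[OF j] in_S[OF that] reach_in_refl reach_in_adj by metis
    then have "\<not> adj G (q k) p \<and> q k \<noteq> p" if "k < m" "k \<noteq> i" for k
      using not_reach_in_nbr p that by blast
    then show ?thesis
      using p(1) by (auto simp: nbhd_def)
  qed
  then show thesis
    using that by metis
qed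

lemma matched_clique_not_H_free:
  assumes G: "is_graph G"
    and verts: "\<And>i. i < n \<Longrightarrow> a i \<in> verts G" "\<And>i. i < n \<Longrightarrow> b i \<in> verts G"
    and aa: "\<And>i j. i < n \<Longrightarrow> j < n \<Longrightarrow> adj G (a i) (a j) \<longleftrightarrow> i \<noteq> j"
    and bb: "\<And>i j. i < n \<Longrightarrow> j < n \<Longrightarrow> adj G (b i) (b j) \<longleftrightarrow> B \<and> i \<noteq> j"
    and ab: "\<And>i j. i < n \<Longrightarrow> j < n \<Longrightarrow> adj G (a i) (b j) \<longleftrightarrow> i = j"
    and ab_neq: "\<And>i j. i < n \<Longrightarrow> j < n \<Longrightarrow> a i \<noteq> b j"
  shows "\<not> H_free (obstructions n) G"
  using CK_induced_subI[OF G verts aa _ ab ab_neq] Kstar_induced_subI[OF G verts aa _ ab] bb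
  by (cases B) (auto simp: H_free_obstructions)

lemma bad_clique_bound:
  obtains R :: nat where "\<And>G q. is_graph G \<Longrightarrow> H_free (obstructions n) G \<Longrightarrow>
    (\<And>i. i < R \<Longrightarrow> q i \<in> bad_verts G) \<Longrightarrow>
    (\<And>i j. i < R \<Longrightarrow> j < R \<Longrightarrow> adj G (q i) (q j) \<longleftrightarrow> i \<noteq> j) \<Longrightarrow> False"
proof -
  obtain N :: nat where N: "\<forall>f :: nat \<Rightarrow> nat \<Rightarrow> bool. \<exists>h. strict_mono_on {..<n} h
      \<and> h ` {..<n} \<subseteq> {..<N} \<and> (\<exists>c. \<forall>i j. i < j \<longrightarrow> j < n \<longrightarrow> f (h i) (h j) = c)"
    using ramsey_homogeneous_subseq[OF finite_UNIV, of n] by blast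
  have False if G: "is_graph G" and free: "H_free (obstructions n) G"
    and bad: "\<And>i. i < N + 2 \<Longrightarrow> q i \<in> bad_verts G"
    and clique: "\<And>i j. i < N + 2 \<Longrightarrow> j < N + 2 \<Longrightarrow> adj G (q i) (q j) \<longleftrightarrow> i \<noteq> j" for G q
  proof -
    obtain p where qp: "\<And>i. i < N + 2 \<Longrightarrow> adj G (q i) (p i)"
      and others: "\<And>i k. i < N + 2 \<Longrightarrow> k < N + 2 \<Longrightarrow> k \<noteq> i \<Longrightarrow> \<not> adj G (q k) (p i) \<and> q k \<noteq> p i"
      using bad_clique_private_nbrs[OF G le_add2 bad clique] by blast
    obtain h B where h: "strict_mono_on {..<n} h" "h ` {..<n} \<subseteq> {..<N}"
      and hom: "\<And>i j. i < j \<Longrightarrow> j < n \<Longrightarrow> adj G (p (h i)) (p (h j)) = B"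
      using spec[OF N, of "\<lambda>a b. adj G (p a) (p b)"] by blast
    have hN: "h i < N + 2" if "i < n" for i
      using h(2) that by auto
    have h_eq: "h i = h j \<longleftrightarrow> i = j" if "i < n" "j < n" for i j
      using strict_mono_on_eqD[OF h(1)] that by auto
    have verts: "q (h i) \<in> verts G" "p (h i) \<in> verts G" if "i < n" for i
      using qp[OF hN[OF that]] graph_adj_verts[OF G] by auto
    have aa: "adj G (q (h i)) (q (h j)) \<longleftrightarrow> i \<noteq> j" if "i < n" "j < n" for i j
      using clique[OF hN[OF that(1)] hN[OF that(2)]] h_eq[OF that] by simp
    have ab: "adj G (q (h i)) (p (h j)) \<longleftrightarrow> i = j"
      and ab_neq: "q (h i) \<noteq> p (h j)" if "i < n" "j < n" for i j
      using qp[OF hN[OF that(2)]] others[OF hN[OF that(2)] hN[OF that(1)]] h_eq[OF that]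
        graph_adj_irrefl[OF G] by auto
    have bb: "adj G (p (h i)) (p (h j)) \<longleftrightarrow> B \<and> i \<noteq> j" if "i < n" "j < n" for i j
      using adj_homogeneous[OF G hom that] .
    show False
      using matched_clique_not_H_free[OF G verts aa bb ab ab_neq] free by blast
  qed
  then show thesis
    by (rule that[of "N + 2"])
qed

lemma complete_star_not_H_free:
  fixes n :: nat
  assumes G: "is_graph G" and "0 < n" and u: "u \<in> verts G"
    and verts: "\<And>i. i \<le> n \<Longrightarrow> y i \<in> verts G" "\<And>i. i \<le> n \<Longrightarrow> w i \<in> verts G"
    and yw: "\<And>i j. i \<le> n \<Longrightarrow> j \<le> n \<Longrightarrow> adj G (y i) (w j)"
    and yy: "\<And>i j. i \<le> n \<Longrightarrow> j \<le> n \<Longrightarrow> adj G (y i) (y j) \<longleftrightarrow> B \<and> i \<noteq> j"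
    and "y 0 \<noteq> y 1"
    and ww: "\<And>i j. i \<le> n \<Longrightarrow> j \<le> n \<Longrightarrow> \<not> adj G (w i) (w j)"
    and w_inj: "inj_on w {..n}"
    and uw: "\<And>i. i \<le> n \<Longrightarrow> adj G u (w i)"
    and uy: "\<And>i. i \<le> n \<Longrightarrow> \<not> adj G u (y i) \<and> u \<noteq> y i"
  shows "\<not> H_free (obstructions n) G"
proof (cases B)
  case True
  have "inj_on w {..<n}"
    using w_inj by (rule inj_on_subset) auto
  then have "induced_sub (Tgraph n) G"
    using True verts yw yy ww uw uy by (intro Tgraph_induced_subI[OF G u, where y = y and w = w]) auto
  then show ?thesis
    by (simp add: H_free_obstructions)
next
  case False
  have "inj_on w {..<n}"
    using w_inj by (rule inj_on_subset) auto
  then have "induced_sub (K2n n) G"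
    using False verts yw yy ww \<open>y 0 \<noteq> y 1\<close> \<open>0 < n\<close>
    by (intro K2n_induced_subI[OF G, where x = "y 0" and y = "y 1"]) auto
  then show ?thesis
    by (simp add: H_free_obstructions)
qed

lemma matched_star_not_H_free:
  fixes n :: nat
  assumes G: "is_graph G" and u: "u \<in> verts G"
    and verts: "\<And>i. i < n \<Longrightarrow> y i \<in> verts G" "\<And>i. i < n \<Longrightarrow> w i \<in> verts G"
    and yw: "\<And>i j. i < n \<Longrightarrow> j < n \<Longrightarrow> adj G (y i) (w j) \<longleftrightarrow> i = j"
    and yy: "\<And>i j. i < n \<Longrightarrow> j < n \<Longrightarrow> adj G (y i) (y j) \<longleftrightarrow> B \<and> i \<noteq> j"
    and ww: "\<And>i j. i < n \<Longrightarrow> j < n \<Longrightarrow> \<not> adj G (w i) (w j)"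
    and uw: "\<And>i. i < n \<Longrightarrow> adj G u (w i)"
    and uy: "\<And>i. i < n \<Longrightarrow> \<not> adj G u (y i) \<and> u \<noteq> y i"
  shows "\<not> H_free (obstructions n) G"
proof (cases B)
  case True
  then have "induced_sub (Kstar n) G"
    using verts yw yy ww by (intro Kstar_induced_subI[OF G, where a = y and b = w]) auto
  then show ?thesis
    by (simp add: H_free_obstructions)
next
  case False
  have "adj G (w i) (y j) \<longleftrightarrow> i = j" if "i < n" "j < n" for i j
    using yw[OF that(2,1)] graph_adj_commute[OF G] by auto
  then have "induced_sub (K1nstar n) G"
    using False verts yy ww uw uy by (intro K1nstar_induced_subI[OF G u, where a = w and b = y]) auto
  then show ?thesis
    by (simp add: H_free_obstructions)
qed

lemma bad_verts_nonadj_nbr: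
  assumes G: "is_graph G" and "v \<in> bad_verts G" "adj G v u"
  obtains y where "adj G v y" "\<not> adj G u y" "u \<noteq> y"
proof -
  have u: "u \<in> nbhd G v"
    using assms(3) graph_adj_verts[OF G] by (simp add: nbhd_def)
  then obtain y where y: "y \<in> nbhd G v" "\<not> reach_in G (nbhd G v) u y"
    using bad_verts_unreachable_nbr[OF G assms(2)] by blast
  then have "u \<noteq> y" "\<not> adj G u y"
    using not_reach_in_nbr[OF reach_in_refl[OF u]] by auto
  then show thesis
    using that y(1) by (auto simp: nbhd_def)
qed

lemma distinct_star_not_H_free:
  fixes n :: nat
  assumes G: "is_graph G" and "0 < n" and u: "u \<in> verts G"
    and verts: "\<And>i. i < 2*n+2 \<Longrightarrow> y i \<in> verts G" "\<And>i. i < 2*n+2 \<Longrightarrow> w i \<in> verts G"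
    and ww: "\<And>i j. i < 2*n+2 \<Longrightarrow> j < 2*n+2 \<Longrightarrow> \<not> adj G (w i) (w j)"
    and w_inj: "inj_on w {..<2*n+2}"
    and uw: "\<And>i. i < 2*n+2 \<Longrightarrow> adj G u (w i)"
    and uy: "\<And>i. i < 2*n+2 \<Longrightarrow> \<not> adj G u (y i) \<and> u \<noteq> y i"
    and y_eq: "\<And>i j. i < 2*n+2 \<Longrightarrow> j < 2*n+2 \<Longrightarrow> y i = y j \<longleftrightarrow> i = j"
    and yy: "\<And>i j. i < 2*n+2 \<Longrightarrow> j < 2*n+2 \<Longrightarrow> adj G (y i) (y j) \<longleftrightarrow> cl \<and> i \<noteq> j"
    and yw: "\<And>i j. i < 2*n+2 \<Longrightarrow> j < 2*n+2 \<Longrightarrow>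
      adj G (y i) (w j) \<longleftrightarrow> (if i < j then fwd else if j < i then bwd else True)"
  shows "\<not> H_free (obstructions n) G"
proof -
  consider fwd | bwd | "\<not> fwd" "\<not> bwd" by blast
  then show ?thesis
  proof cases
    case 1
    \<comment> \<open>the first half of the \<open>y\<close>'s is complete to the second half of the \<open>w\<close>'s\<close>
    then have "adj G (y i) (w j)" if "i \<le> j" "j < 2*n+2" for i j
      using yw[of i j] that by auto
    moreover have "inj_on (\<lambda>j. w (n + 1 + j)) {..n}"
    proof (rule inj_onI)
      fix i j assume "i \<in> {..n}" "j \<in> {..n}" "w (n + 1 + i) = w (n + 1 + j)"
      then show "i = j"
        using inj_onD[OF w_inj, of "n + 1 + i" "n + 1 + j"] by auto
    qed
    ultimately show ?thesis
      using verts yy y_eq ww uw uy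
      by (intro complete_star_not_H_free[OF G \<open>0 < n\<close> u, where y = y and B = cl]) auto
  next
    case 2
    then have "adj G (y i) (w j)" if "j \<le> i" "i < 2*n+2" for i j
      using yw[of i j] that by auto
    moreover have "inj_on w {..n}"
      using w_inj by (rule inj_on_subset) auto
    moreover have "y (n + 1) \<noteq> y (n + 2)"
      using y_eq[of "n + 1" "n + 2"] \<open>0 < n\<close> by simp
    ultimately show ?thesis
      using verts yy y_eq ww uw uy
      by (intro complete_star_not_H_free[OF G \<open>0 < n\<close> u, where y = "\<lambda>i. y (n + 1 + i)" and B = cl])
        auto
  next
    case 3
    then have "adj G (y i) (w j) \<longleftrightarrow> i = j" if "i < n" "j < n" for i j
      using yw[of i j] that by auto
    then show ?thesis
      using verts yy ww uw uy
      by (intro matched_star_not_H_free[OF G u, where y = y and w = w and B = cl]) simp_all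
  qed
qed

lemma homogeneous_star_not_H_free:
  fixes n :: nat
  assumes G: "is_graph G" and "0 < n" and u: "u \<in> verts G"
    and verts: "\<And>i. i < 2*n+2 \<Longrightarrow> y i \<in> verts G" "\<And>i. i < 2*n+2 \<Longrightarrow> w i \<in> verts G"
    and ww: "\<And>i j. i < 2*n+2 \<Longrightarrow> j < 2*n+2 \<Longrightarrow> \<not> adj G (w i) (w j)"
    and w_inj: "inj_on w {..<2*n+2}"
    and uw: "\<And>i. i < 2*n+2 \<Longrightarrow> adj G u (w i)"
    and uy: "\<And>i. i < 2*n+2 \<Longrightarrow> \<not> adj G u (y i) \<and> u \<noteq> y i"
    and yw_diag: "\<And>i. i < 2*n+2 \<Longrightarrow> adj G (y i) (w i)"
    and hom: "\<And>i j. i < j \<Longrightarrow> j < 2*n+2 \<Longrightarrow>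
      (y i = y j, adj G (y i) (w j), adj G (y j) (w i), adj G (y i) (y j)) = (eq, fwd, bwd, cl)"
  shows "\<not> H_free (obstructions n) G"
proof (cases eq)
  case True
  then have "adj G (y 0) (w i)" if "i < 2*n+2" for i
    using hom[of 0 i] yw_diag[OF that] that by (cases "i = 0") auto
  moreover have "inj_on w {..<n}"
    using w_inj by (rule inj_on_subset) auto
  ultimately have "induced_sub (K2n n) G"
    using u verts ww uw uy
    by (intro K2n_induced_subI[OF G, where x = u and y = "y 0"]) auto
  then show ?thesis
    by (simp add: H_free_obstructions)
next
  case False
  have y_eq: "y i = y j \<longleftrightarrow> i = j" if "i < 2*n+2" "j < 2*n+2" for i j
    using hom[of i j] hom[of j i] False that by (cases i j rule: linorder_cases) auto
  have yy: "adj G (y i) (y j) \<longleftrightarrow> cl \<and> i \<noteq> j" if "i < 2*n+2" "j < 2*n+2" for i j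
    using adj_homogeneous[OF G, where x = y and B = cl, OF _ that] hom by blast
  have yw: "adj G (y i) (w j) \<longleftrightarrow> (if i < j then fwd else if j < i then bwd else True)"
    if "i < 2*n+2" "j < 2*n+2" for i j
    using hom[of i j] hom[of j i] yw_diag that by (cases i j rule: linorder_cases) auto
  show ?thesis
    by (rule distinct_star_not_H_free[OF G \<open>0 < n\<close> u verts ww w_inj uw uy y_eq yy yw])
qed

lemma bad_independent_common_nbr_bound:
  fixes n :: nat
  assumes "0 < n"
  obtains M :: nat where "\<And>G u w. is_graph G \<Longrightarrow> H_free (obstructions n) G \<Longrightarrow>
    (\<And>i. i < M \<Longrightarrow> w i \<in> bad_verts G) \<Longrightarrow>
    (\<And>i j. i < M \<Longrightarrow> j < M \<Longrightarrow> \<not> adj G (w i) (w j)) \<Longrightarrow> inj_on w {..<M} \<Longrightarrow>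
    (\<And>i. i < M \<Longrightarrow> adj G u (w i)) \<Longrightarrow> False"
proof -
  obtain N :: nat where N: "\<forall>f :: nat \<Rightarrow> nat \<Rightarrow> bool \<times> bool \<times> bool \<times> bool.
      \<exists>h. strict_mono_on {..<2*n+2} h \<and> h ` {..<2*n+2} \<subseteq> {..<N}
      \<and> (\<exists>c. \<forall>i j. i < j \<longrightarrow> j < 2*n+2 \<longrightarrow> f (h i) (h j) = c)"
    using ramsey_homogeneous_subseq[OF finite_UNIV, of "2*n+2"] by blast
  have False if G: "is_graph G" and free: "H_free (obstructions n) G"
    and bad: "\<And>i. i < N \<Longrightarrow> w i \<in> bad_verts G"
    and ww: "\<And>i j. i < N \<Longrightarrow> j < N \<Longrightarrow> \<not> adj G (w i) (w j)" and w_inj: "inj_on w {..<N}"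
    and uw: "\<And>i. i < N \<Longrightarrow> adj G u (w i)" for G u w
  proof -
    have "\<forall>i\<in>{..<N}. \<exists>y. adj G (w i) y \<and> \<not> adj G u y \<and> u \<noteq> y"
    proof
      fix i assume "i \<in> {..<N}"
      then have "adj G (w i) u"
        using uw graph_adj_sym[OF G] by blast
      then obtain y where "adj G (w i) y" "\<not> adj G u y" "u \<noteq> y"
        using bad_verts_nonadj_nbr[OF G bad] \<open>i \<in> {..<N}\<close> by blast
      then show "\<exists>y. adj G (w i) y \<and> \<not> adj G u y \<and> u \<noteq> y"
        by blast
    qed
    from bchoice[OF this] obtain y
      where wy: "\<And>i. i < N \<Longrightarrow> adj G (w i) (y i) \<and> \<not> adj G u (y i) \<and> u \<noteq> y i"
      by auto
    define f where "f a b = (y a = y b, adj G (y a) (w b), adj G (y b) (w a), adj G (y a) (y b))"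
      for a b
    obtain h c where h: "strict_mono_on {..<2*n+2} h" "h ` {..<2*n+2} \<subseteq> {..<N}"
      and hom: "\<And>i j. i < j \<Longrightarrow> j < 2*n+2 \<Longrightarrow> f (h i) (h j) = c"
      using spec[OF N, of f] by blast
    obtain eq fwd bwd cl where c: "c = (eq, fwd, bwd, cl)"
      by (cases c) auto
    have hN: "h i < N" if "i < 2*n+2" for i
      using h(2) that by auto
    have "inj_on (\<lambda>i. w (h i)) {..<2*n+2}"
      using comp_inj_on[OF strict_mono_on_imp_inj_on[OF h(1)] inj_on_subset[OF w_inj h(2)]]
      by (simp add: comp_def)
    moreover have "u \<in> verts G"
      using uw[of "h 0"] hN[of 0] graph_adj_verts[OF G] by auto
    moreover have "w (h i) \<in> verts G" "y (h i) \<in> verts G" "adj G (y (h i)) (w (h i))"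
      "adj G u (w (h i))" "\<not> adj G u (y (h i)) \<and> u \<noteq> y (h i)" if "i < 2*n+2" for i
      using wy[OF hN[OF that]] uw[OF hN[OF that]] graph_adj_verts[OF G] graph_adj_commute[OF G]
      by auto
    moreover have "\<not> adj G (w (h i)) (w (h j))" if "i < 2*n+2" "j < 2*n+2" for i j
      using ww hN that by blast
    moreover have "(y (h i) = y (h j), adj G (y (h i)) (w (h j)), adj G (y (h j)) (w (h i)),
        adj G (y (h i)) (y (h j))) = (eq, fwd, bwd, cl)" if "i < j" "j < 2*n+2" for i j
      using hom[OF that] by (simp add: c f_def)
    ultimately have "\<not> H_free (obstructions n) G"
      by (intro homogeneous_star_not_H_free[OF G \<open>0 < n\<close>, where y = "\<lambda>i. y (h i)"
            and w = "\<lambda>i. w (h i)" and eq = eq and fwd = fwd and bwd = bwd and cl = cl]) simp_all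
    then show False
      using free by blast
  qed
  then show thesis
    by (rule that)
qed

lemma bad_independent_degree_bound:
  fixes n :: nat
  assumes "0 < n"
  obtains M :: nat where "\<And>G s (L :: nat) w. is_graph G \<Longrightarrow> H_free (obstructions n) G \<Longrightarrow>
    (\<And>i. i < L \<Longrightarrow> s i \<in> bad_verts G) \<Longrightarrow>
    (\<And>i j. i < L \<Longrightarrow> j < L \<Longrightarrow> \<not> adj G (s i) (s j)) \<Longrightarrow> inj_on s {..<L} \<Longrightarrow>
    card {i. i < L \<and> adj G w (s i)} < M"
proof -
  obtain M :: nat where M: "\<And>G u w. is_graph G \<Longrightarrow> H_free (obstructions n) G \<Longrightarrow>
    (\<And>i. i < M \<Longrightarrow> w i \<in> bad_verts G) \<Longrightarrow>
    (\<And>i j. i < M \<Longrightarrow> j < M \<Longrightarrow> \<not> adj G (w i) (w j)) \<Longrightarrow> inj_on w {..<M} \<Longrightarrow>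
    (\<And>i. i < M \<Longrightarrow> adj G u (w i)) \<Longrightarrow> False"
    using bad_independent_common_nbr_bound[OF assms] by blast
  have "card {i. i < L \<and> adj G w (s i)} < M"
    if G: "is_graph G" and free: "H_free (obstructions n) G"
      and bad: "\<And>i. i < L \<Longrightarrow> s i \<in> bad_verts G"
      and ss: "\<And>i j. i < L \<Longrightarrow> j < L \<Longrightarrow> \<not> adj G (s i) (s j)" and s_inj: "inj_on s {..<L}"
    for G s w and L :: nat
  proof (rule ccontr)
    assume "\<not> ?thesis"
    then obtain t where t: "inj_on t {..<M}" "t ` {..<M} \<subseteq> {i. i < L \<and> adj G w (s i)}"
      using card_le_inj[of "{..<M}" "{i. i < L \<and> adj G w (s i)}"] by force
    then have t_nbrs: "t i < L" "adj G w (s (t i))" if "i < M" for i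
      using that by auto
    have "inj_on (\<lambda>i. s (t i)) {..<M}"
      using comp_inj_on[OF t(1) inj_on_subset[OF s_inj]] t(2) by (auto simp: comp_def)
    then show False
      using t_nbrs bad ss by (intro M[OF G free, of "\<lambda>i. s (t i)" w]) auto
  qed
  then show thesis
    by (rule that)
qed

lemma homogeneous_parents_matched:
  fixes m n :: nat
  assumes G: "is_graph G" and free: "H_free (obstructions n) G" and "n \<le> m" "0 < m"
    and verts: "\<And>i. i < m \<Longrightarrow> p i \<in> verts G" "\<And>i. i < m \<Longrightarrow> s i \<in> verts G"
    and ss: "\<And>i j. i < m \<Longrightarrow> j < m \<Longrightarrow> \<not> adj G (s i) (s j)"
    and ps: "\<And>i. i < m \<Longrightarrow> adj G (p i) (s i)"
    and no_common_nbr: "\<And>x. \<exists>i<m. \<not> adj G x (s i)"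
    and hom: "\<And>i j. i < j \<Longrightarrow> j < m \<Longrightarrow>
      (p i = p j, adj G (p i) (p j), adj G (s i) (p j), adj G (s j) (p i)) = (eq, cl, fwd, bwd)"
  shows "inj_on p {..<m}" and "\<And>i j. i < m \<Longrightarrow> j < m \<Longrightarrow> \<not> adj G (p i) (p j)"
    and matched: "\<And>i j. i < m \<Longrightarrow> j < m \<Longrightarrow> adj G (p i) (s j) \<longleftrightarrow> i = j"
proof -
  have "\<not> eq"
  proof
    assume eq
    then have "adj G (p 0) (s i)" if "i < m" for i
      using hom[of 0 i] ps[OF that] that by (cases "i = 0") auto
    then show False
      using no_common_nbr by blast
  qed
  moreover have "\<not> fwd"
  proof
    assume fwd
    then have "adj G (p (m - 1)) (s i)" if "i < m" for i
      using hom[of i "m - 1"] ps[OF that] that graph_adj_commute[OF G] by (cases "i = m - 1") auto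
    then show False
      using no_common_nbr by blast
  qed
  moreover have "\<not> bwd"
  proof
    assume bwd
    then have "adj G (p 0) (s i)" if "i < m" for i
      using hom[of 0 i] ps[OF that] that graph_adj_commute[OF G] by (cases "i = 0") auto
    then show False
      using no_common_nbr by blast
  qed
  ultimately have p_eq: "p i = p j \<longleftrightarrow> i = j"
    and matched: "adj G (p i) (s j) \<longleftrightarrow> i = j" if "i < m" "j < m" for i j
    using hom[of i j] hom[of j i] ps that graph_adj_commute[OF G]
    by (cases i j rule: linorder_cases; auto)+
  have pp: "adj G (p i) (p j) \<longleftrightarrow> cl \<and> i \<noteq> j" if "i < m" "j < m" for i j
    using adj_homogeneous[OF G, where x = p and B = cl, OF _ that] hom by blast
  have "\<not> cl"
  proof
    assume cl
    then have "induced_sub (Kstar n) G"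
      using verts ss matched pp \<open>n \<le> m\<close> by (intro Kstar_induced_subI[OF G, where a = p and b = s]) auto
    then show False
      using free by (simp add: H_free_obstructions)
  qed
  then show "\<And>i j. i < m \<Longrightarrow> j < m \<Longrightarrow> \<not> adj G (p i) (p j)"
    using pp by blast
  show "inj_on p {..<m}"
    using p_eq by (auto simp: inj_on_def)
  show "\<And>i j. i < m \<Longrightarrow> j < m \<Longrightarrow> adj G (p i) (s j) \<longleftrightarrow> i = j"
    by (rule matched)
qed

lemma card_Collect_comp_le:
  fixes h :: "nat \<Rightarrow> nat"
  assumes "inj_on h {..<m}" "h ` {..<m} \<subseteq> {..<N}"
  shows "card {i. i < m \<and> P (h i)} \<le> card {i. i < N \<and> P i}"
proof -
  have "inj_on h {i. i < m \<and> P (h i)}"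
    using assms(1) by (rule inj_on_subset) auto
  moreover have "h ` {i. i < m \<and> P (h i)} \<subseteq> {i. i < N \<and> P i}"
    using assms(2) by auto
  ultimately show ?thesis
    by (rule card_inj_on_le) simp
qed

lemma K1nstar_if_many_nbrs:
  fixes k n :: nat
  assumes G: "is_graph G"
    and verts: "\<And>i. i < k \<Longrightarrow> p i \<in> verts G" "\<And>i. i < k \<Longrightarrow> s i \<in> verts G"
    and pp: "\<And>i j. i < k \<Longrightarrow> j < k \<Longrightarrow> \<not> adj G (p i) (p j)"
    and ss: "\<And>i j. i < k \<Longrightarrow> j < k \<Longrightarrow> \<not> adj G (s i) (s j)"
    and ps: "\<And>i j. i < k \<Longrightarrow> j < k \<Longrightarrow> adj G (p i) (s j) \<longleftrightarrow> i = j"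
    and s_inj: "inj_on s {..<k}"
    and many: "card {i. i < k \<and> adj G w (s i)} + n < card {i. i < k \<and> adj G w (p i)}"
  shows "induced_sub (K1nstar n) G"
proof -
  define A where "A = {i. i < k \<and> adj G w (p i) \<and> \<not> adj G w (s i) \<and> w \<noteq> s i}"
  let ?P = "{i. i < k \<and> adj G w (p i)}" and ?S = "{i. i < k \<and> adj G w (s i)}"
    and ?E = "{i. i < k \<and> w = s i}"
  have "card ?P \<le> card (A \<union> ?S \<union> ?E)"
    by (rule card_mono) (auto simp: A_def)
  also have "\<dots> \<le> card (A \<union> ?S) + card ?E"
    by (rule card_Un_le)
  also have "\<dots> \<le> card A + card ?S + card ?E"
    using card_Un_le[of A ?S] by simp
  finally have "card ?P \<le> card A + card ?S + card ?E" .
  moreover have "card {i. i < k \<and> w = s i} \<le> 1"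
    using s_inj by (auto simp: card_le_Suc0_iff_eq inj_on_def)
  ultimately have "n \<le> card A"
    using many by linarith
  then obtain t where t: "inj_on t {..<n}" "t ` {..<n} \<subseteq> A"
    using card_le_inj[of "{..<n}" A] by (force simp: A_def)
  then have tA: "t i < k" "adj G w (p (t i))" "\<not> adj G w (s (t i))" "w \<noteq> s (t i)" if "i < n" for i
    using that by (auto simp: A_def)
  have "?P \<noteq> {}"
    using many card.empty by (metis not_less_zero)
  then obtain i where "i < k" "adj G w (p i)"
    by blast
  then have w: "w \<in> verts G"
    using graph_adj_verts[OF G] by blast
  have tv: "p (t i) \<in> verts G" "s (t i) \<in> verts G" if "i < n" for i
    using verts tA(1)[OF that] by blast+
  have tt: "\<not> adj G (p (t i)) (p (t j))" "\<not> adj G (s (t i)) (s (t j))"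
    and matched: "adj G (p (t i)) (s (t j)) \<longleftrightarrow> i = j" if "i < n" "j < n" for i j
    using pp ss ps[OF tA(1)[OF that(1)] tA(1)[OF that(2)]] inj_onD[OF t(1)] tA(1) that by auto
  show ?thesis
    by (rule K1nstar_induced_subI[OF G w tv tA(2-4) tt matched])
qed

definition heavy_nbr_in_layer :: "nat \<Rightarrow> nat \<Rightarrow> nat \<Rightarrow> nat \<Rightarrow> bool" where
  "heavy_nbr_in_layer n d M N \<longleftrightarrow> (\<forall>G r s. is_graph G \<and> H_free (obstructions n) G \<and> r \<in> verts G
     \<and> (\<forall>i<N. s i \<in> bfs_layer G r d) \<and> inj_on s {..<N} \<and> (\<forall>i<N. \<forall>j<N. \<not> adj G (s i) (s j))
     \<longrightarrow> (\<exists>w. M \<le> card {i. i < N \<and> adj G w (s i)}))"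

lemma heavy_nbr_in_layerD:
  assumes "heavy_nbr_in_layer n d M N" "is_graph G" "H_free (obstructions n) G" "r \<in> verts G"
    "\<And>i. i < N \<Longrightarrow> s i \<in> bfs_layer G r d" "inj_on s {..<N}"
    "\<And>i j. i < N \<Longrightarrow> j < N \<Longrightarrow> \<not> adj G (s i) (s j)"
  shows "\<exists>w. M \<le> card {i. i < N \<and> adj G w (s i)}"
  using assms unfolding heavy_nbr_in_layer_def by blast

lemma heavy_nbr_in_layer_mono:
  assumes "heavy_nbr_in_layer n d M N" "N \<le> N'"
  shows "heavy_nbr_in_layer n d M N'"
  unfolding heavy_nbr_in_layer_def
proof (intro allI impI, elim conjE)
  fix G r s
  assume G: "is_graph G" "H_free (obstructions n) G" "r \<in> verts G"
    and s: "\<forall>i<N'. s i \<in> bfs_layer G r d" "inj_on s {..<N'}" "\<forall>i<N'. \<forall>j<N'. \<not> adj G (s i) (s j)"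
  have "inj_on s {..<N}"
    using s(2) by (rule inj_on_subset) (use assms(2) in auto)
  then obtain w where "M \<le> card {i. i < N \<and> adj G w (s i)}"
    using heavy_nbr_in_layerD[OF assms(1) G] s(1,3) assms(2) by fastforce
  moreover have "card {i. i < N \<and> adj G w (s i)} \<le> card {i. i < N' \<and> adj G w (s i)}"
    using assms(2) by (intro card_mono) auto
  ultimately show "\<exists>w. M \<le> card {i. i < N' \<and> adj G w (s i)}"
    by (meson le_trans)
qed

lemma heavy_nbr_of_matched_parents:
  fixes n k M :: nat
  assumes heavy: "heavy_nbr_in_layer n d (M + n + 1) k"
    and G: "is_graph G" and free: "H_free (obstructions n) G" and r: "r \<in> verts G"
    and layer: "\<And>i. i < k \<Longrightarrow> p i \<in> bfs_layer G r d" and p_inj: "inj_on p {..<k}"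
    and pp: "\<And>i j. i < k \<Longrightarrow> j < k \<Longrightarrow> \<not> adj G (p i) (p j)"
    and s_verts: "\<And>i. i < k \<Longrightarrow> s i \<in> verts G" and s_inj: "inj_on s {..<k}"
    and ss: "\<And>i j. i < k \<Longrightarrow> j < k \<Longrightarrow> \<not> adj G (s i) (s j)"
    and ps: "\<And>i j. i < k \<Longrightarrow> j < k \<Longrightarrow> adj G (p i) (s j) \<longleftrightarrow> i = j"
  shows "\<exists>w. M \<le> card {i. i < k \<and> adj G w (s i)}"
proof -
  obtain w where w: "M + n + 1 \<le> card {i. i < k \<and> adj G w (p i)}"
    using heavy_nbr_in_layerD[OF heavy G free r layer p_inj pp] by blast
  have "M \<le> card {i. i < k \<and> adj G w (s i)}"
  proof (rule ccontr)
    assume "\<not> ?thesis"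
    then have many: "card {i. i < k \<and> adj G w (s i)} + n < card {i. i < k \<and> adj G w (p i)}"
      using w by linarith
    have p_verts: "p i \<in> verts G" if "i < k" for i
      using layer[OF that] bfs_layer_subset[OF r] by blast
    have "induced_sub (K1nstar n) G"
      by (rule K1nstar_if_many_nbrs[OF G p_verts s_verts pp ss ps s_inj many])
    then show False
      using free by (simp add: H_free_obstructions)
  qed
  then show ?thesis ..
qed

lemma heavy_nbr_in_layer_Suc:
  assumes IH: "heavy_nbr_in_layer n d (M + n + 1) N'"
  shows "\<exists>N. heavy_nbr_in_layer n (Suc d) M N"
proof -
  define m where "m = N' + n + M + 1"
  obtain N :: nat where N: "\<forall>f :: nat \<Rightarrow> nat \<Rightarrow> bool \<times> bool \<times> bool \<times> bool.
      \<exists>h. strict_mono_on {..<m} h \<and> h ` {..<m} \<subseteq> {..<N}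
      \<and> (\<exists>c. \<forall>i j. i < j \<longrightarrow> j < m \<longrightarrow> f (h i) (h j) = c)"
    using ramsey_homogeneous_subseq[OF finite_UNIV, of m] by blast
  have "\<exists>w. M \<le> card {i. i < N \<and> adj G w (s i)}"
    if G: "is_graph G" and free: "H_free (obstructions n) G" and r: "r \<in> verts G"
      and layer: "\<forall>i<N. s i \<in> bfs_layer G r (Suc d)" and s_inj: "inj_on s {..<N}"
      and ss: "\<forall>i<N. \<forall>j<N. \<not> adj G (s i) (s j)" for G r s
  proof (rule ccontr)
    assume "\<nexists>w. M \<le> card {i. i < N \<and> adj G w (s i)}"
    then have deg: "card {i. i < N \<and> adj G w (s i)} < M" for w
      by (simp add: not_le)
    have "\<forall>i\<in>{..<N}. \<exists>q. q \<in> bfs_layer G r d \<and> adj G q (s i)"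
      using layer by auto
    from bchoice[OF this] obtain p
      where p: "\<And>i. i < N \<Longrightarrow> p i \<in> bfs_layer G r d \<and> adj G (p i) (s i)"
      by auto
    define f where "f a b = (p a = p b, adj G (p a) (p b), adj G (s a) (p b), adj G (s b) (p a))"
      for a b
    obtain h c where h: "strict_mono_on {..<m} h" "h ` {..<m} \<subseteq> {..<N}"
      and hom: "\<And>i j. i < j \<Longrightarrow> j < m \<Longrightarrow> f (h i) (h j) = c"
      using spec[OF N, of f] by blast
    have h_inj: "inj_on h {..<m}"
      by (rule strict_mono_on_imp_inj_on[OF h(1)])
    have hN: "h i < N" if "i < m" for i
      using h(2) that by auto
    have deg_h: "card {i. i < k \<and> adj G w (s (h i))} < M" if "k \<le> m" for k w
    proof -
      have "card {i. i < k \<and> adj G w (s (h i))} \<le> card {i. i < m \<and> adj G w (s (h i))}"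
        using that by (intro card_mono) auto
      also have "\<dots> \<le> card {i. i < N \<and> adj G w (s i)}"
        by (rule card_Collect_comp_le[OF h_inj h(2)])
      finally show ?thesis
        using deg[of w] by linarith
    qed
    have no_common_nbr: "\<exists>i<m. \<not> adj G x (s (h i))" for x
    proof (rule ccontr)
      assume "\<not> ?thesis"
      then have "{i. i < m \<and> adj G x (s (h i))} = {..<m}"
        by auto
      then show False
        using deg_h[of m x] by (simp add: m_def)
    qed
    have ps: "adj G (p (h i)) (s (h i))" and layer_p: "p (h i) \<in> bfs_layer G r d"
      and verts: "p (h i) \<in> verts G" "s (h i) \<in> verts G" if "i < m" for i
      using p[OF hN[OF that]] graph_adj_verts[OF G] by auto
    have ss_h: "\<not> adj G (s (h i)) (s (h j))" if "i < m" "j < m" for i j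
      using ss hN that by blast
    obtain eq cl fwd bwd where "c = (eq, cl, fwd, bwd)"
      by (cases c)
    then have hom': "(p (h i) = p (h j), adj G (p (h i)) (p (h j)), adj G (s (h i)) (p (h j)),
        adj G (s (h j)) (p (h i))) = (eq, cl, fwd, bwd)" if "i < j" "j < m" for i j
      using hom[OF that] by (simp add: f_def)
    have "n \<le> m" "0 < m"
      by (simp_all add: m_def)
    note parents = homogeneous_parents_matched[OF G free this verts ss_h ps no_common_nbr hom']
    have s_inj_h: "inj_on (\<lambda>i. s (h i)) {..<m}"
      using comp_inj_on[OF h_inj inj_on_subset[OF s_inj h(2)]] by (simp add: comp_def)
    have N'_m: "{..<N'} \<subseteq> {..<m}" and N'_less: "\<And>i. i < N' \<Longrightarrow> i < m"
      by (auto simp: m_def)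
    have layer': "p (h i) \<in> bfs_layer G r d" and verts': "s (h i) \<in> verts G" if "i < N'" for i
      using layer_p verts(2) N'_less[OF that] by blast+
    have pp': "\<not> adj G (p (h i)) (p (h j))" and ss': "\<not> adj G (s (h i)) (s (h j))"
      and matched': "adj G (p (h i)) (s (h j)) \<longleftrightarrow> i = j" if "i < N'" "j < N'" for i j
      using parents(2,3) ss_h N'_less[OF that(1)] N'_less[OF that(2)] by blast+
    obtain w where "M \<le> card {i. i < N' \<and> adj G w (s (h i))}"
      using heavy_nbr_of_matched_parents[OF IH G free r layer' inj_on_subset[OF parents(1) N'_m] pp'
          verts' inj_on_subset[OF s_inj_h N'_m] ss' matched']
      by blast
    then show False
      using deg_h[of N' w] by (simp add: m_def)
  qed
  then have "heavy_nbr_in_layer n (Suc d) M N"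
    unfolding heavy_nbr_in_layer_def by blast
  then show ?thesis ..
qed

lemma heavy_nbr_in_layer_exists: "\<exists>N. heavy_nbr_in_layer n d M N"
proof (induction d arbitrary: M)
  case 0
  have "heavy_nbr_in_layer n 0 M 2"
    unfolding heavy_nbr_in_layer_def
  proof (intro allI impI, elim conjE)
    fix G r and s :: "nat \<Rightarrow> nat"
    assume "\<forall>i<2. s i \<in> bfs_layer G r 0" "inj_on s {..<2}"
    then show "\<exists>w. M \<le> card {i. i < 2 \<and> adj G w (s i)}"
      using inj_onD[of s "{..<2}" 0 1] by auto
  qed
  then show ?case ..
next
  case (Suc d)
  then obtain N' where "heavy_nbr_in_layer n d (M + n + 1) N'"
    by blast
  then show ?case
    by (rule heavy_nbr_in_layer_Suc)
qed

lemma bad_independent_bound: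
  fixes n :: nat
  assumes "0 < n"
  obtains L :: nat where "\<And>G r d s. is_graph G \<Longrightarrow> H_free (obstructions n) G \<Longrightarrow> r \<in> verts G \<Longrightarrow>
    d < n \<Longrightarrow> (\<And>i. i < L \<Longrightarrow> s i \<in> bfs_layer G r d \<inter> bad_verts G) \<Longrightarrow> inj_on s {..<L} \<Longrightarrow>
    (\<And>i j. i < L \<Longrightarrow> j < L \<Longrightarrow> \<not> adj G (s i) (s j)) \<Longrightarrow> False"
proof -
  obtain M :: nat where M: "\<And>G s (L :: nat) w. is_graph G \<Longrightarrow> H_free (obstructions n) G \<Longrightarrow>
    (\<And>i. i < L \<Longrightarrow> s i \<in> bad_verts G) \<Longrightarrow>
    (\<And>i j. i < L \<Longrightarrow> j < L \<Longrightarrow> \<not> adj G (s i) (s j)) \<Longrightarrow> inj_on s {..<L} \<Longrightarrow>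
    card {i. i < L \<and> adj G w (s i)} < M"
    using bad_independent_degree_bound[OF assms] by blast
  have "\<forall>d. \<exists>N. heavy_nbr_in_layer n d M N"
    using heavy_nbr_in_layer_exists by blast
  then obtain N :: "nat \<Rightarrow> nat" where N: "\<And>d. heavy_nbr_in_layer n d M (N d)"
    by (metis choice)
  define L where "L = (\<Sum>d<n. N d)"
  have heavy: "heavy_nbr_in_layer n d M L" if "d < n" for d
    using heavy_nbr_in_layer_mono[OF N] member_le_sum[of d "{..<n}" N] that by (simp add: L_def)
  have False
    if G: "is_graph G" and free: "H_free (obstructions n) G" and r: "r \<in> verts G" and "d < n"
      and s: "\<And>i. i < L \<Longrightarrow> s i \<in> bfs_layer G r d \<inter> bad_verts G" and s_inj: "inj_on s {..<L}"
      and ss: "\<And>i j. i < L \<Longrightarrow> j < L \<Longrightarrow> \<not> adj G (s i) (s j)" for G r d s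
  proof -
    have layer: "\<And>i. i < L \<Longrightarrow> s i \<in> bfs_layer G r d"
      and bad: "\<And>i. i < L \<Longrightarrow> s i \<in> bad_verts G"
      using s by blast+
    obtain w where "M \<le> card {i. i < L \<and> adj G w (s i)}"
      using heavy_nbr_in_layerD[OF heavy[OF \<open>d < n\<close>] G free r layer s_inj ss] by blast
    moreover have "card {i. i < L \<and> adj G w (s i)} < M"
      by (rule M[OF G free bad ss s_inj])
    ultimately show False
      by simp
  qed
  then show thesis
    by (rule that)
qed

lemma bad_homogeneous_bound:
  fixes n :: nat
  assumes "0 < n"
  obtains K :: nat where "\<And>G r d v B. is_graph G \<Longrightarrow> H_free (obstructions n) G \<Longrightarrow> r \<in> verts G \<Longrightarrow>
    d < n \<Longrightarrow> (\<And>i. i < K \<Longrightarrow> v i \<in> bfs_layer G r d \<inter> bad_verts G) \<Longrightarrow> inj_on v {..<K} \<Longrightarrow>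
    (\<And>i j. i < K \<Longrightarrow> j < K \<Longrightarrow> adj G (v i) (v j) \<longleftrightarrow> B \<and> i \<noteq> j) \<Longrightarrow> False"
proof -
  obtain R :: nat where R: "\<And>G q. is_graph G \<Longrightarrow> H_free (obstructions n) G \<Longrightarrow>
    (\<And>i. i < R \<Longrightarrow> q i \<in> bad_verts G) \<Longrightarrow>
    (\<And>i j. i < R \<Longrightarrow> j < R \<Longrightarrow> adj G (q i) (q j) \<longleftrightarrow> i \<noteq> j) \<Longrightarrow> False"
    using bad_clique_bound by blast
  obtain L :: nat where L: "\<And>G r d s. is_graph G \<Longrightarrow> H_free (obstructions n) G \<Longrightarrow> r \<in> verts G \<Longrightarrow>
    d < n \<Longrightarrow> (\<And>i. i < L \<Longrightarrow> s i \<in> bfs_layer G r d \<inter> bad_verts G) \<Longrightarrow> inj_on s {..<L} \<Longrightarrow>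
    (\<And>i j. i < L \<Longrightarrow> j < L \<Longrightarrow> \<not> adj G (s i) (s j)) \<Longrightarrow> False"
    using bad_independent_bound[OF assms] by blast
  have False
    if G: "is_graph G" and free: "H_free (obstructions n) G" and r: "r \<in> verts G" and "d < n"
      and v: "\<And>i. i < R + L \<Longrightarrow> v i \<in> bfs_layer G r d \<inter> bad_verts G"
      and v_inj: "inj_on v {..<R + L}"
      and vv: "\<And>i j. i < R + L \<Longrightarrow> j < R + L \<Longrightarrow> adj G (v i) (v j) \<longleftrightarrow> B \<and> i \<noteq> j" for G r d v B
  proof (cases B)
    case True
    then show False
      using v vv by (intro R[OF G free, of v]) auto
  next
    case False
    have "inj_on v {..<L}"
      using v_inj by (rule inj_on_subset) auto
    then show False
      using v vv False by (intro L[OF G free r \<open>d < n\<close>, of v]) auto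
  qed
  then show thesis
    by (rule that[of "R + L"])
qed

lemma bfs_depth_less:
  assumes G: "is_graph G" and conn: "connected_graph G" and r: "r \<in> verts G"
    and no_path: "\<not> induced_sub (Path n) G"
  obtains depth where "\<And>x. x \<in> verts G \<Longrightarrow> x \<in> bfs_layer G r (depth x) \<and> depth x < n"
proof
  fix x assume x: "x \<in> verts G"
  define k where "k = (LEAST k. x \<in> bfs_layer G r k)"
  have layer: "x \<in> bfs_layer G r k"
    unfolding k_def by (rule LeastI_ex[OF bfs_layer_cover[OF conn r x]])
  moreover have "k < n"
  proof (rule ccontr)
    assume "\<not> k < n"
    then show False
      using induced_Path_if_bfs_layer[OF G r layer, of n] no_path by simp
  qed
  ultimately show "x \<in> bfs_layer G r (LEAST k. x \<in> bfs_layer G r k)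
      \<and> (LEAST k. x \<in> bfs_layer G r k) < n"
    by (simp add: k_def)
qed

lemma bad_verts_bound:
  fixes n :: nat
  assumes "0 < n"
  obtains C :: nat where "\<And>G. is_graph G \<Longrightarrow> connected_graph G \<Longrightarrow> H_free (obstructions n) G \<Longrightarrow>
    card (bad_verts G) < C"
proof -
  obtain K :: nat where K: "\<And>G r d v B. is_graph G \<Longrightarrow> H_free (obstructions n) G \<Longrightarrow> r \<in> verts G \<Longrightarrow>
    d < n \<Longrightarrow> (\<And>i. i < K \<Longrightarrow> v i \<in> bfs_layer G r d \<inter> bad_verts G) \<Longrightarrow> inj_on v {..<K} \<Longrightarrow>
    (\<And>i j. i < K \<Longrightarrow> j < K \<Longrightarrow> adj G (v i) (v j) \<longleftrightarrow> B \<and> i \<noteq> j) \<Longrightarrow> False"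
    using bad_homogeneous_bound[OF assms] by blast
  have fin: "finite (UNIV \<times> {..<n} :: (bool \<times> nat) set)"
    by simp
  obtain N :: nat where N: "\<forall>f :: nat \<Rightarrow> nat \<Rightarrow> bool \<times> nat.
    (\<forall>i j. i < j \<longrightarrow> j < N \<longrightarrow> f i j \<in> UNIV \<times> {..<n}) \<longrightarrow>
    (\<exists>h. strict_mono_on {..<K + 2} h \<and> h ` {..<K + 2} \<subseteq> {..<N}
       \<and> (\<exists>c. \<forall>i j. i < j \<longrightarrow> j < K + 2 \<longrightarrow> f (h i) (h j) = c))"
    using ramsey_homogeneous_subseq[OF fin, of "K + 2"] by blast
  have "card (bad_verts G) < N + 1"
    if G: "is_graph G" and conn: "connected_graph G" and free: "H_free (obstructions n) G" for G
  proof (rule ccontr)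
    assume many: "\<not> card (bad_verts G) < N + 1"
    then obtain v where v: "inj_on v {..<N}" "v ` {..<N} \<subseteq> bad_verts G"
      using card_le_inj[of "{..<N}" "bad_verts G"] graph_finite_verts[OF G]
      by (force simp: bad_verts_def)
    obtain r where r: "r \<in> verts G"
      using many by (fastforce simp: bad_verts_def)
    obtain depth where depth: "\<And>x. x \<in> verts G \<Longrightarrow> x \<in> bfs_layer G r (depth x) \<and> depth x < n"
      using bfs_depth_less[OF G conn r] free by (auto simp: H_free_obstructions)
    have v_verts: "v i \<in> verts G" if "i < N" for i
      using v(2) that by (auto simp: bad_verts_def)
    \<comment> \<open>colour a pair by its adjacency and by the layer of its smaller element\<close>
    define f where "f a b = (adj G (v a) (v b), depth (v a))" for a b
    have "\<forall>i j. i < j \<longrightarrow> j < N \<longrightarrow> f i j \<in> UNIV \<times> {..<n}"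
      using depth v_verts by (simp add: f_def)
    then obtain h B d where h: "strict_mono_on {..<K + 2} h" "h ` {..<K + 2} \<subseteq> {..<N}"
      and hom: "\<And>i j. i < j \<Longrightarrow> j < K + 2 \<Longrightarrow> f (h i) (h j) = (B, d)"
      using spec[OF N, of f] by (metis prod.collapse)
    have hN: "h i < N" if "i < K + 2" for i
      using h(2) that by auto
    have "inj_on (\<lambda>i. v (h i)) {..<K + 2}"
      using comp_inj_on[OF strict_mono_on_imp_inj_on[OF h(1)] inj_on_subset[OF v(1) h(2)]]
      by (simp add: comp_def)
    then have vh_inj: "inj_on (\<lambda>i. v (h i)) {..<K}"
      by (rule inj_on_subset) auto
    have "d < n"
      using hom[of 0 "K + 1"] depth[OF v_verts[OF hN[of 0]]] by (simp add: f_def)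
    moreover have "v (h i) \<in> bfs_layer G r d \<inter> bad_verts G" if "i < K" for i
      using hom[of i "K + 1"] depth[OF v_verts[OF hN]] v(2) hN that by (auto simp: f_def)
    moreover have hom_adj: "adj G (v (h i)) (v (h j)) = B" if "i < j" "j < K + 2" for i j
      using hom[OF that] by (simp add: f_def)
    have "adj G (v (h i)) (v (h j)) \<longleftrightarrow> B \<and> i \<noteq> j" if "i < K" "j < K" for i j
      using adj_homogeneous[OF G, where x = "\<lambda>i. v (h i)", OF hom_adj] that by simp
    ultimately show False
      using K[OF G free r _ _ vh_inj] by blast
  qed
  then show thesis
    by (rule that)
qed

lemma Kstar_graph: "is_graph (Kstar n)"
  unfolding is_graph_def Kstar_verts Kstar_adj by auto

lemma K1nstar_graph: "is_graph (K1nstar n)"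
  unfolding is_graph_def K1nstar_verts K1nstar_adj by auto

lemma Path_graph: "is_graph (Path n)"
  unfolding is_graph_def Path_verts Path_adj by auto

lemma K2n_graph: "is_graph (K2n n)"
  unfolding is_graph_def K2n_verts K2n_adj by auto

lemma CK_graph: "is_graph (CK n)"
  unfolding is_graph_def CK_verts CK_adj by auto

lemma Tgraph_graph: "is_graph (Tgraph n)"
  unfolding is_graph_def Tgraph_verts Tgraph_adj by auto

lemma connected_graphI_hub:
  assumes G: "is_graph G" and z: "z \<in> verts G"
    and hub: "\<And>x. x \<in> verts G \<Longrightarrow> x \<noteq> z \<Longrightarrow> adj G x z \<or> (\<exists>y. adj G x y \<and> adj G y z)"
  shows "connected_graph G"
proof -
  have to_z: "reach_in G (verts G) x z" if x: "x \<in> verts G" for x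
  proof (cases "x = z")
    case True
    then show ?thesis using reach_in_refl[OF z] by simp
  next
    case False
    then consider "adj G x z" | y where "adj G x y" "adj G y z"
      using hub[OF x] by blast
    then show ?thesis
    proof cases
      case 1
      then show ?thesis using reach_in_adj[OF x z] by blast
    next
      case (2 y)
      then have "y \<in> verts G" using graph_adj_verts[OF G] by blast
      then show ?thesis
        using reach_in_trans[OF reach_in_adj[OF x _ 2(1)] reach_in_adj[OF _ z 2(2)]] by blast
    qed
  qed
  show ?thesis
    unfolding connected_graph_def
    using reach_in_trans[OF to_z reach_in_sym[OF G to_z]] by blast
qed

lemma Kstar_connected: "connected_graph (Kstar n)"
proof (cases "n = 0")
  case False
  show ?thesis
  proof (rule connected_graphI_hub[OF Kstar_graph, of 0])
    fix x assume "x \<in> verts (Kstar n)" "x \<noteq> 0"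
    then show "adj (Kstar n) x 0 \<or> (\<exists>y. adj (Kstar n) x y \<and> adj (Kstar n) y 0)"
      by (auto simp: Kstar_verts Kstar_adj intro!: exI[of _ "x - n"])
  qed (use False in \<open>simp add: Kstar_verts\<close>)
qed (simp add: connected_graph_def Kstar_verts)

lemma CK_connected: "connected_graph (CK n)"
proof (cases "n = 0")
  case False
  show ?thesis
  proof (rule connected_graphI_hub[OF CK_graph, of 0])
    fix x assume "x \<in> verts (CK n)" "x \<noteq> 0"
    then show "adj (CK n) x 0 \<or> (\<exists>y. adj (CK n) x y \<and> adj (CK n) y 0)"
      by (auto simp: CK_verts CK_adj intro!: exI[of _ "x - n"])
  qed (use False in \<open>simp add: CK_verts\<close>)
qed (simp add: connected_graph_def CK_verts)

lemma K1nstar_connected: "connected_graph (K1nstar n)"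
proof (rule connected_graphI_hub[OF K1nstar_graph, of 0])
  fix x assume "x \<in> verts (K1nstar n)" "x \<noteq> 0"
  then show "adj (K1nstar n) x 0 \<or> (\<exists>y. adj (K1nstar n) x y \<and> adj (K1nstar n) y 0)"
    by (auto simp: K1nstar_verts K1nstar_adj intro!: exI[of _ "x - n"])
qed (simp add: K1nstar_verts)

lemma K2n_connected: "0 < n \<Longrightarrow> connected_graph (K2n n)"
proof (rule connected_graphI_hub[OF K2n_graph, of 0])
  fix x assume "0 < n" "x \<in> verts (K2n n)" "x \<noteq> 0"
  then show "adj (K2n n) x 0 \<or> (\<exists>y. adj (K2n n) x y \<and> adj (K2n n) y 0)"
    by (auto simp: K2n_verts K2n_adj intro!: exI[of _ 2])
qed (simp add: K2n_verts)

lemma Tgraph_connected: "0 < n \<Longrightarrow> connected_graph (Tgraph n)"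
proof (rule connected_graphI_hub[OF Tgraph_graph, of n])
  fix x assume "0 < n" "x \<in> verts (Tgraph n)" "x \<noteq> n"
  then show "adj (Tgraph n) x n \<or> (\<exists>y. adj (Tgraph n) x y \<and> adj (Tgraph n) y n)"
    by (auto simp: Tgraph_verts Tgraph_adj intro!: exI[of _ 0])
qed (simp add: Tgraph_verts)

lemma Path_connected: "connected_graph (Path n)"
proof -
  have "reach_in (Path n) (verts (Path n)) x 0" if "x < n" for x
    using that
  proof (induction x)
    case 0
    then show ?case by (simp add: reach_in_refl Path_verts)
  next
    case (Suc x)
    then have "reach_in (Path n) (verts (Path n)) (Suc x) x"
      by (intro reach_in_adj) (auto simp: Path_verts Path_adj)
    then show ?case
      using Suc reach_in_trans by simp
  qed
  then show ?thesis
    unfolding connected_graph_def Path_verts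
    using reach_in_trans reach_in_sym[OF Path_graph] by (metis atLeastLessThan_iff)
qed

lemma Kstar_bad_verts: "2 \<le> n \<Longrightarrow> {..<n} \<subseteq> bad_verts (Kstar n)"
proof
  fix i assume "2 \<le> n" "i \<in> {..<n}"
  then show "i \<in> bad_verts (Kstar n)"
    by (intro bad_vertsI[OF Kstar_graph, where v = i and x = "i + n" and y = "if i = 0 then 1 else 0"])
       (auto simp: Kstar_adj)
qed

lemma CK_bad_verts: "2 \<le> n \<Longrightarrow> {..<n} \<subseteq> bad_verts (CK n)"
proof
  fix i assume "2 \<le> n" "i \<in> {..<n}"
  then show "i \<in> bad_verts (CK n)"
    by (intro bad_vertsI[OF CK_graph, where v = i and x = "i + n" and y = "if i = 0 then 1 else 0"])
       (auto simp: CK_adj)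
qed

lemma K1nstar_bad_verts: "{1..n} \<subseteq> bad_verts (K1nstar n)"
proof
  fix i assume "i \<in> {1..n}"
  then show "i \<in> bad_verts (K1nstar n)"
    by (intro bad_vertsI[OF K1nstar_graph, where v = i and x = "i + n" and y = 0]) (auto simp: K1nstar_adj)
qed

lemma Path_bad_verts: "{1..<n - 1} \<subseteq> bad_verts (Path n)"
proof
  fix i assume "i \<in> {1..<n - 1}"
  then show "i \<in> bad_verts (Path n)"
    by (intro bad_vertsI[OF Path_graph, where v = i and x = "i - 1" and y = "i + 1"]) (auto simp: Path_adj)
qed

lemma K2n_bad_verts: "{2..<n + 2} \<subseteq> bad_verts (K2n n)"
proof
  fix i assume "i \<in> {2..<n + 2}"
  then show "i \<in> bad_verts (K2n n)"
    by (intro bad_vertsI[OF K2n_graph, where v = i and x = 0 and y = 1]) (auto simp: K2n_adj)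
qed

lemma Tgraph_bad_verts: "{n..<2 * n} \<subseteq> bad_verts (Tgraph n)"
proof
  fix i assume "i \<in> {n..<2 * n}"
  then show "i \<in> bad_verts (Tgraph n)"
    by (intro bad_vertsI[OF Tgraph_graph, where v = i and x = "2 * n" and y = 0]) (auto simp: Tgraph_adj)
qed

lemma card_le_card_bad_verts: "is_graph X \<Longrightarrow> S \<subseteq> bad_verts X \<Longrightarrow> card S \<le> card (bad_verts X)"
  by (rule card_mono) (auto simp: bad_verts_def dest: graph_finite_verts)

lemma obstructions_connected: "X \<in> obstructions n \<Longrightarrow> 0 < n \<Longrightarrow> connected_graph X"
  by (auto simp: obstructions_def Kstar_connected K1nstar_connected Path_connected
      K2n_connected CK_connected Tgraph_connected)

lemma obstructions_graph: "X \<in> obstructions n \<Longrightarrow> is_graph X"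
  by (auto simp: obstructions_def Kstar_graph K1nstar_graph Path_graph K2n_graph CK_graph Tgraph_graph)

lemma obstructions_many_bad_verts:
  assumes X: "X \<in> obstructions n"
  shows "n - 2 \<le> card (bad_verts X)"
proof -
  have "\<exists>S. S \<subseteq> bad_verts X \<and> n - 2 \<le> card S"
  proof (cases "2 \<le> n")
    case True
    from X consider "X = Kstar n" | "X = K1nstar n" | "X = Path n" | "X = K2n n" | "X = CK n"
      | "X = Tgraph n"
      by (auto simp: obstructions_def)
    then show ?thesis
    proof cases
      case 1
      then show ?thesis using Kstar_bad_verts[OF True] by (intro exI[of _ "{..<n}"]) simp
    next
      case 2
      then show ?thesis using K1nstar_bad_verts by (intro exI[of _ "{1..n}"]) simp
    next
      case 3
      then show ?thesis using Path_bad_verts by (intro exI[of _ "{1..<n - 1}"]) simp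
    next
      case 4
      then show ?thesis using K2n_bad_verts by (intro exI[of _ "{2..<n + 2}"]) simp
    next
      case 5
      then show ?thesis using CK_bad_verts[OF True] by (intro exI[of _ "{..<n}"]) simp
    next
      case 6
      then show ?thesis using Tgraph_bad_verts by (intro exI[of _ "{n..<2 * n}"]) simp
    qed
  qed auto
  then show ?thesis
    using card_le_card_bad_verts[OF obstructions_graph[OF X]] le_trans by blast
qed

theorem theorem1p6:
  fixes \<H> :: "graph set"
  assumes "\<forall>H\<in>\<H>. is_graph H"
  shows "(\<exists>c::nat. \<forall>G. is_graph G \<and> connected_graph G \<and> H_free \<H> G
              \<longrightarrow> card (bad_verts G) < c)
     \<longleftrightarrow> (\<exists>n::nat. n > 0 \<and>
              family_le \<H> {Kstar n, K1nstar n, Path n, K2n n, CK n, Tgraph n})"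
proof
  assume "\<exists>c::nat. \<forall>G. is_graph G \<and> connected_graph G \<and> H_free \<H> G \<longrightarrow> card (bad_verts G) < c"
  then obtain c :: nat
    where c: "\<And>G. is_graph G \<Longrightarrow> connected_graph G \<Longrightarrow> H_free \<H> G \<Longrightarrow> card (bad_verts G) < c"
    by blast
  have "family_le \<H> (obstructions (c + 2))"
    unfolding family_le_def
  proof
    fix X assume X: "X \<in> obstructions (c + 2)"
    show "\<exists>H\<in>\<H>. induced_sub H X"
    proof (rule ccontr)
      assume "\<not> ?thesis"
      then have "card (bad_verts X) < c"
        using c obstructions_graph[OF X] obstructions_connected[OF X] by (simp add: H_free_def)
      then show False
        using obstructions_many_bad_verts[OF X] by simp
    qed
  qed
  then show "\<exists>n::nat. n > 0 \<and> family_le \<H> {Kstar n, K1nstar n, Path n, K2n n, CK n, Tgraph n}"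
    unfolding obstructions_def by (intro exI[of _ "c + 2"]) simp
next
  assume "\<exists>n::nat. n > 0 \<and> family_le \<H> {Kstar n, K1nstar n, Path n, K2n n, CK n, Tgraph n}"
  then obtain n :: nat where "0 < n" and fam: "family_le \<H> (obstructions n)"
    unfolding obstructions_def by blast
  obtain C :: nat where "\<And>G. is_graph G \<Longrightarrow> connected_graph G \<Longrightarrow>
      H_free (obstructions n) G \<Longrightarrow> card (bad_verts G) < C"
    using bad_verts_bound[OF \<open>0 < n\<close>] by blast
  then show "\<exists>c::nat. \<forall>G. is_graph G \<and> connected_graph G \<and> H_free \<H> G \<longrightarrow> card (bad_verts G) < c"
    using H_free_if_family_le[OF fam] by blast
qed


end
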